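(* Let $n\in\mathbb{Z}$ with $|n|\geq1$, $\alpha>0$, $R>0$ and $-\frac{r_0^2+n^2}{2R^2}<\kappa<\alpha^{-1}-\frac{r_0^2+n^2}{2R^2}$. Then there exists a constant $C_2>0$ such that $\langle\gamma_\kappa'(u),u\rangle<-C_2<0$ for all $u\in\mathcal{M}$.
   Context: $r_0\approx2.404825$ is the first positive zero of the Bessel function $J_0$. $H$ is the completion of $\{u\in C^1[0,R]: u(0)=0=u(R)\}$ with respect to the inner product $(u,\tilde u)=\int_0^R\{ru_r\tilde u_r+\frac1r u\tilde u\}dr$. $\gamma_\kappa(u)=\frac12\int_0^R\{ru_r^2+\frac{n^2}{r}u^2-2(\alpha^{-1}-\kappa)ru^2+2\alpha^{-1}\frac{ru^2}{1+\alpha u^2}\}dr$, $\gamma_\kappa'$ is its Fréchet derivative, $\langle\cdot,\cdot\rangle$ the duality between $H^{-1}$ and $H$, and $\mathcal{M}=\{u\in H\setminus\{0\}:\gamma_\kappa(u)=0\}$. *)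

theory Defs
  imports "HOL-Analysis.Analysis"
begin

definition J0 :: "real \<Rightarrow> real" where
  "J0 x = (\<Sum>k. (-1) ^ k / (fact k) ^ 2 * (x / 2) ^ (2 * k))"

definition r0 :: real where
  "r0 = (LEAST x. x > 0 \<and> J0 x = 0)"

definition C1_0 :: "real \<Rightarrow> (real \<Rightarrow> real) \<Rightarrow> (real \<Rightarrow> real) \<Rightarrow> bool" where
  "C1_0 R \<phi> \<phi>' \<longleftrightarrow> continuous_on {0..R} \<phi>' \<and>
     (\<forall>x\<in>{0..R}. (\<phi> has_real_derivative \<phi>' x) (at x within {0..R})) \<and>
     \<phi> 0 = 0 \<and> \<phi> R = 0"

definition Hnorm2 :: "real \<Rightarrow> (real \<Rightarrow> real) \<Rightarrow> (real \<Rightarrow> real) \<Rightarrow> real" where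
  "Hnorm2 R u u' = (LINT r:{0..R}|lborel. r * (u' r)^2 + (u r)^2 / r)"

text \<open>The space H, represented by pairs (u, u_r): limits in the H-norm of C^1 functions
  vanishing at 0 and R (together with the limit of their derivatives).\<close>
definition Hspace :: "real \<Rightarrow> ((real \<Rightarrow> real) \<times> (real \<Rightarrow> real)) set" where
  "Hspace R = {(u, u'). u \<in> borel_measurable borel \<and> u' \<in> borel_measurable borel \<and>
      set_integrable lborel {0..R} (\<lambda>r. r * (u' r)^2 + (u r)^2 / r) \<and>
      (\<exists>\<phi> \<phi>'. (\<forall>k. C1_0 R (\<phi> k) (\<phi>' k)) \<and>
         (\<lambda>k. Hnorm2 R (\<lambda>r. \<phi> k r - u r) (\<lambda>r. \<phi>' k r - u' r)) \<longlonglongrightarrow> 0)}"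

definition gamma :: "real \<Rightarrow> int \<Rightarrow> real \<Rightarrow> real \<Rightarrow> (real \<Rightarrow> real) \<times> (real \<Rightarrow> real) \<Rightarrow> real" where
  "gamma R n \<alpha> \<kappa> p = (case p of (u, u') \<Rightarrow>
     1/2 * (LINT r:{0..R}|lborel. r * (u' r)^2 + (real_of_int n)^2 / r * (u r)^2
        - 2 * (1/\<alpha> - \<kappa>) * r * (u r)^2 + 2 * (1/\<alpha>) * (r * (u r)^2 / (1 + \<alpha> * (u r)^2))))"

definition Mset :: "real \<Rightarrow> int \<Rightarrow> real \<Rightarrow> real \<Rightarrow> ((real \<Rightarrow> real) \<times> (real \<Rightarrow> real)) set" where
  "Mset R n \<alpha> \<kappa> = {p \<in> Hspace R. Hnorm2 R (fst p) (snd p) \<noteq> 0 \<and> gamma R n \<alpha> \<kappa> p = 0}"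

definition Hscale :: "real \<Rightarrow> (real \<Rightarrow> real) \<times> (real \<Rightarrow> real) \<Rightarrow> (real \<Rightarrow> real) \<times> (real \<Rightarrow> real)" where
  "Hscale c p = ((\<lambda>r. c * fst p r), (\<lambda>r. c * snd p r))"

end

theory Submission
  imports Defs
begin

text \<open>Along the ray \<open>t \<mapsto> (1 + t) u\<close> the functional splits as \<open>s\<^sup>2/2 Q(u)\<close> minus the
  integral of a nonlinearity, whose \<open>s\<close>-derivative is controlled pointwise by a quadratic
  Taylor remainder. Subtracting \<open>2 \<gamma>\<^sub>\<kappa>(u) = 0\<close> shows that on \<open>M\<close> the derivative at
  \<open>t = 0\<close> is \<open>-2 \<integral> r u\<^sup>4 / (1 + \<alpha> u\<^sup>2)\<^sup>2\<close>.

  To bound this away from \<open>0\<close>: for every \<open>\<rho> < r0\<close>, ground state substitution with the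
  positive eigenfunction \<open>J0 (\<rho> r / R)\<close> gives \<open>\<integral> r u\<^sub>r\<^sup>2 \<ge> (\<rho>/R)\<^sup>2 \<integral> r u\<^sup>2\<close>,
  first for \<open>C\<^sup>1\<close> functions and then on \<open>H\<close> by approximation. With the lower bound on
  \<open>\<kappa>\<close> this makes the quadratic part coercive, \<open>Q(u) \<ge> \<theta> \<parallel>u\<parallel>\<^sup>2\<close>. On \<open>M\<close> we have
  \<open>Q(u) = 2 \<integral> r u\<^sup>4 / (1 + \<alpha> u\<^sup>2)\<close>, and the pointwise bound \<open>u\<^sup>2 \<le> \<parallel>u\<parallel>\<^sup>2\<close>
  then gives first \<open>\<parallel>u\<parallel>\<^sup>2 \<ge> \<theta> / (2 R\<^sup>2)\<close> and then a uniform lower bound for the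
  quartic term.\<close>

section \<open>The Bessel function \<open>J0\<close> and its first zero\<close>

definition bessel_coeff :: "nat \<Rightarrow> real" where
  "bessel_coeff k = (-1)^k / ((fact k)^2 * 4^k)"

definition bessel_ser :: "real \<Rightarrow> real" where
  "bessel_ser y = (\<Sum>k. bessel_coeff k * y^k)"

definition bessel_ser_deriv :: "real \<Rightarrow> real" where
  "bessel_ser_deriv y = (\<Sum>k. diffs bessel_coeff k * y^k)"

definition bessel_term :: "real \<Rightarrow> nat \<Rightarrow> real" where
  "bessel_term y k = y^k / (fact k)^2"

lemma summable_if_coeff_le_inverse_fact:
  fixes c :: "nat \<Rightarrow> real"
  assumes "\<And>k. \<bar>c k\<bar> \<le> 1 / fact k"
  shows "summable (\<lambda>k. c k * y^k)"
proof (rule summable_comparison_test')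
  show "summable (\<lambda>k. inverse (fact k) * \<bar>y\<bar>^k)" by (rule summable_exp)
  fix k :: nat
  have "norm (c k * y^k) = \<bar>c k\<bar> * \<bar>y\<bar>^k" by (simp add: abs_mult power_abs)
  also have "\<dots> \<le> inverse (fact k) * \<bar>y\<bar>^k"
    using assms[of k] by (intro mult_right_mono) (auto simp: divide_inverse)
  finally show "norm (c k * y^k) \<le> inverse (fact k) * \<bar>y\<bar>^k" .
qed

lemma fact_le_fact_sq: "(fact k :: real) \<le> (fact k)^2"
proof -
  have "(fact k :: real) * 1 \<le> fact k * fact k" by (intro mult_left_mono) auto
  then show ?thesis by (simp add: power2_eq_square)
qed

lemma summable_bessel_coeff: "summable (\<lambda>k. bessel_coeff k * y^k)"
proof (rule summable_if_coeff_le_inverse_fact)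
  fix k
  have "(fact k :: real) * 1 \<le> (fact k)^2 * 4^k"
    using fact_le_fact_sq[of k] by (intro mult_mono) auto
  then have "1 / ((fact k)^2 * 4^k) \<le> 1 / (fact k :: real)"
    by (intro divide_left_mono) auto
  then show "\<bar>bessel_coeff k\<bar> \<le> 1 / fact k"
    by (simp add: bessel_coeff_def abs_mult power_abs)
qed

lemma summable_bessel_term: "summable (bessel_term y)"
proof -
  have "summable (\<lambda>k. (1 / (fact k)^2) * y^k)"
  proof (rule summable_if_coeff_le_inverse_fact)
    fix k
    show "\<bar>1 / (fact k)^2\<bar> \<le> 1 / (fact k :: real)"
      using fact_le_fact_sq[of k] by (simp add: divide_left_mono)
  qed
  then show ?thesis unfolding bessel_term_def by (simp add: field_simps)
qed

lemma two_power_sq_eq: "(2::real)^k * 2^k = 4^k"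
  by (simp flip: power_mult_distrib)

lemma J0_eq_bessel_ser: "J0 x = bessel_ser (x^2)"
  unfolding J0_def bessel_ser_def bessel_coeff_def
  by (simp add: power_mult power_divide power2_eq_square field_simps two_power_sq_eq)

lemma J0_eq_alternating_sum: "J0 x = (\<Sum>k. (-1)^k * bessel_term (x^2/4) k)"
  unfolding J0_def bessel_term_def
  by (simp add: power_mult power_divide power2_eq_square field_simps two_power_sq_eq)

lemma bessel_ser_has_derivative: "(bessel_ser has_real_derivative bessel_ser_deriv y) (at y)"
  unfolding bessel_ser_def bessel_ser_deriv_def
  by (rule termdiffs_strong_converges_everywhere[OF summable_bessel_coeff])

lemma bessel_ser_deriv_has_derivative:
  "(bessel_ser_deriv has_real_derivative (\<Sum>k. diffs (diffs bessel_coeff) k * y^k)) (at y)"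
  unfolding bessel_ser_deriv_def
  by (rule termdiffs_strong_converges_everywhere, rule termdiff_converges_all, rule summable_bessel_coeff)

text \<open>Bessel's equation for \<open>J0\<close>, in the variable \<open>y = x\<^sup>2\<close>.\<close>
lemma bessel_ser_ode:
  "((\<lambda>y. y * bessel_ser_deriv y) has_real_derivative - bessel_ser y / 4) (at y)"
proof -
  define b where "b k = real k * bessel_coeff k" for k
  have shift: "b (Suc k) * z^Suc k = z * (diffs bessel_coeff k * z^k)" for k z
    by (simp add: b_def diffs_def)
  have sd: "summable (\<lambda>k. diffs bessel_coeff k * z^k)" for z
    by (rule termdiff_converges_all) (rule summable_bessel_coeff)
  have sb: "summable (\<lambda>k. b k * z^k)" for z
    using summable_mult[OF sd[of z], of z] by (simp flip: shift summable_Suc_iff[of "\<lambda>k. b k * z^k"])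
  have eq: "z * bessel_ser_deriv z = (\<Sum>k. b k * z^k)" for z
  proof -
    have "z * bessel_ser_deriv z = (\<Sum>k. b (Suc k) * z^Suc k)"
      unfolding shift bessel_ser_deriv_def by (rule suminf_mult[OF sd, symmetric])
    also have "\<dots> = (\<Sum>k. b k * z^k) - b 0 * z^0"
      by (rule suminf_split_head[OF sb])
    finally show ?thesis by (simp add: b_def)
  qed
  have diffs_b: "diffs b k = - bessel_coeff k / 4" for k
  proof -
    define m where "m = real (Suc k)"
    have "m > 0" unfolding m_def by simp
    moreover have "diffs b k = m * m * bessel_coeff (Suc k)"
      unfolding diffs_def b_def m_def by simp
    moreover have "bessel_coeff (Suc k) = - ((-1)^k / ((m * m) * ((fact k)^2 * 4^k) * 4))"
      unfolding bessel_coeff_def m_def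
      by (simp add: fact_Suc power2_eq_square mult_ac del: of_nat_Suc)
    ultimately show ?thesis by (simp add: bessel_coeff_def)
  qed
  have "((\<lambda>z. \<Sum>k. b k * z^k) has_real_derivative (\<Sum>k. diffs b k * y^k)) (at y)"
    by (rule termdiffs_strong_converges_everywhere[OF sb])
  moreover have "(\<Sum>k. diffs b k * y^k) = - bessel_ser y / 4"
    unfolding diffs_b bessel_ser_def
    using suminf_divide[OF summable_bessel_coeff[of y], of 4]
      suminf_minus[OF summable_divide[OF summable_bessel_coeff[of y], of 4]]
    by simp
  ultimately show ?thesis by (simp add: eq)
qed

lemma isCont_bessel_ser: "isCont bessel_ser y"
  using bessel_ser_has_derivative DERIV_isCont by blast

lemma isCont_bessel_ser_deriv: "isCont bessel_ser_deriv y"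
  using bessel_ser_deriv_has_derivative DERIV_isCont by blast

lemma continuous_on_bessel_ser [continuous_intros]:
  "continuous_on s g \<Longrightarrow> continuous_on s (\<lambda>x. bessel_ser (g x))"
  by (rule continuous_on_compose2[of UNIV bessel_ser s g])
    (auto intro: continuous_at_imp_continuous_on isCont_bessel_ser)

lemma continuous_on_bessel_ser_deriv [continuous_intros]:
  "continuous_on s g \<Longrightarrow> continuous_on s (\<lambda>x. bessel_ser_deriv (g x))"
  by (rule continuous_on_compose2[of UNIV bessel_ser_deriv s g])
    (auto intro: continuous_at_imp_continuous_on isCont_bessel_ser_deriv)

lemma isCont_J0: "isCont J0 x"
  unfolding J0_eq_bessel_ser[abs_def] by (intro continuous_intros isCont_o2[OF _ isCont_bessel_ser])

lemma bessel_term_Suc: "bessel_term y (Suc k) = bessel_term y k * (y / (real (Suc k))^2)"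
  unfolding bessel_term_def by (simp add: fact_Suc power2_eq_square field_simps del: of_nat_Suc)

lemma bessel_term_nonneg: "y \<ge> 0 \<Longrightarrow> bessel_term y k \<ge> 0"
  unfolding bessel_term_def by simp

lemma bessel_term_Suc_le:
  assumes "0 \<le> y" "y \<le> real (Suc k)^2"
  shows "bessel_term y (Suc k) \<le> bessel_term y k"
proof -
  have "y / (real (Suc k))^2 \<le> 1" using assms by (simp add: divide_le_eq_1)
  then show ?thesis
    unfolding bessel_term_Suc using bessel_term_nonneg[OF assms(1)]
    by (metis mult.right_neutral mult_left_mono)
qed

text \<open>Both sign estimates are Leibniz bounds on the alternating series of \<open>J0\<close>.\<close>
lemma J0_pos_if_less_2:
  assumes "0 \<le> x" "x < 2"
  shows "J0 x > 0"
proof -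
  let ?y = "x^2/4"
  have y: "0 \<le> ?y" "?y < 1"
    using assms power_strict_mono[of x 2 2] by auto
  have mono: "bessel_term ?y (Suc k) \<le> bessel_term ?y k" for k
  proof (rule bessel_term_Suc_le[OF y(1)])
    have "(1::real) \<le> real (Suc k)^2" by simp
    then show "?y \<le> real (Suc k)^2" using y(2) by linarith
  qed
  have "(\<Sum>i<2*1. (-1)^i * bessel_term ?y i) \<le> (\<Sum>i. (-1)^i * bessel_term ?y i)"
    by (rule summable_Leibniz'(2)[OF summable_LIMSEQ_zero[OF summable_bessel_term]
          bessel_term_nonneg[OF y(1)] mono])
  moreover have "(\<Sum>i<2*1. (-1)^i * bessel_term ?y i) = 1 - ?y"
    by (simp add: bessel_term_def numeral_2_eq_2)
  ultimately show ?thesis unfolding J0_eq_alternating_sum using y by linarith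
qed

lemma J0_3_neg: "J0 3 < 0"
proof -
  let ?y = "9/4 :: real"
  define s where "s k = bessel_term ?y (Suc k)" for k
  have s0: "0 \<le> s k" for k unfolding s_def by (rule bessel_term_nonneg) simp
  have sz: "s \<longlonglongrightarrow> 0"
    unfolding s_def by (rule LIMSEQ_Suc[OF summable_LIMSEQ_zero[OF summable_bessel_term]])
  have smono: "s (Suc k) \<le> s k" for k
  proof -
    have "(2::real)^2 \<le> real (Suc (Suc k))^2" by (intro power_mono) auto
    then show ?thesis unfolding s_def by (intro bessel_term_Suc_le) auto
  qed
  have sum1: "summable (\<lambda>k. (-1)^k * bessel_term ?y k)"
    by (rule summable_comparison_test'[OF summable_bessel_term[of ?y], of 0])
      (simp add: abs_mult bessel_term_def)
  have "(\<Sum>i<2*2. (-1)^i * s i) \<le> (\<Sum>i. (-1)^i * s i)"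
    by (rule summable_Leibniz'(2)[OF sz s0 smono])
  moreover have "(\<Sum>i<2*2. (-1)^i * s i) > 1"
    by (simp add: s_def bessel_term_def numeral_eq_Suc fact_Suc)
  moreover have "(\<Sum>k. (-1)^Suc k * bessel_term ?y (Suc k))
      = (\<Sum>k. (-1)^k * bessel_term ?y k) - (-1)^0 * bessel_term ?y 0"
    by (rule suminf_split_head[OF sum1])
  moreover have "(\<Sum>k. (-1)^Suc k * bessel_term ?y (Suc k)) = - (\<Sum>k. (-1)^k * s k)"
    using suminf_minus[OF summable_Leibniz'(1)[OF sz s0 smono]] by (simp add: s_def)
  ultimately have "(\<Sum>k. (-1)^k * bessel_term ?y k) < 0"
    by (simp add: bessel_term_def)
  then show ?thesis unfolding J0_eq_alternating_sum by simp
qed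

text \<open>The \<open>LEAST\<close> in the definition of \<open>r0\<close> is attained: \<open>J0\<close> has no zero in \<open>[0, 2)\<close>
  and one in \<open>[2, 3]\<close>, and its zeros form a closed set.\<close>
lemma r0_pos_and_J0_pos_below: "r0 > 0" "\<And>x. 0 \<le> x \<Longrightarrow> x < r0 \<Longrightarrow> J0 x > 0"
proof -
  define S where "S = {x. 2 \<le> x \<and> J0 x = 0}"
  obtain z where z: "1 \<le> z" "z \<le> 3" "J0 z = 0"
    using IVT2[of J0 3 0 1] J0_3_neg J0_pos_if_less_2[of 1] isCont_J0 by force
  then have "z \<in> S" using J0_pos_if_less_2[of z] unfolding S_def by force
  have bdd: "bdd_below S" unfolding S_def by (rule bdd_belowI[of _ 2]) auto
  have "closed S" unfolding S_def
    by (intro closed_Collect_conj closed_Collect_le closed_Collect_eq continuous_intros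
        continuous_at_imp_continuous_on ballI isCont_J0)
  then have inS: "Inf S \<in> S" using closed_contains_Inf[OF _ bdd] \<open>z \<in> S\<close> by blast
  have least: "Inf S \<le> y" if "y > 0" "J0 y = 0" for y
    using that J0_pos_if_less_2[of y] cInf_lower[OF _ bdd, of y] unfolding S_def by force
  have r0_eq: "r0 = Inf S"
    unfolding r0_def by (rule Least_equality) (use inS least in \<open>auto simp: S_def\<close>)
  show "r0 > 0" using inS unfolding r0_eq S_def by auto
  fix x assume x: "0 \<le> x" "x < r0"
  show "J0 x > 0"
  proof (rule ccontr)
    assume "\<not> J0 x > 0"
    then obtain y where y: "0 \<le> y" "y \<le> x" "J0 y = 0"
      using IVT2[of J0 x 0 0] x isCont_J0 J0_pos_if_less_2[of 0] by force
    then have "y > 0" using J0_pos_if_less_2[of 0] by (cases "y = 0") auto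
    then show False using least y x r0_eq by force
  qed
qed


section \<open>A weighted Poincare inequality for \<open>C\<^sup>1\<close> functions\<close>

lemma C1_0D:
  assumes "C1_0 R \<phi> \<phi>'"
  shows "continuous_on {0..R} \<phi>'"
    "\<And>x. x \<in> {0..R} \<Longrightarrow> (\<phi> has_real_derivative \<phi>' x) (at x within {0..R})"
    "\<phi> 0 = 0" "\<phi> R = 0" "continuous_on {0..R} \<phi>"
  using assms unfolding C1_0_def by (auto intro: DERIV_continuous_on)

definition bessel_weight :: "real \<Rightarrow> real \<Rightarrow> real" where
  "bessel_weight k r = bessel_ser (k * r^2)"

definition bessel_weight_deriv :: "real \<Rightarrow> real \<Rightarrow> real" where
  "bessel_weight_deriv k r = bessel_ser_deriv (k * r^2) * (2 * k * r)"

lemma bessel_weight_has_derivative: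
  "(bessel_weight k has_real_derivative bessel_weight_deriv k r) (at r within s)"
proof -
  have "((\<lambda>r. bessel_ser (k * r^2)) has_real_derivative
      bessel_ser_deriv (k * r^2) * (k * (2 * r))) (at r within s)"
    by (intro DERIV_chain2[OF bessel_ser_has_derivative] derivative_eq_intros) auto
  then show ?thesis unfolding bessel_weight_def[abs_def] bessel_weight_deriv_def by (simp add: mult_ac)
qed

lemma bessel_weight_ode:
  "((\<lambda>r. r * bessel_weight_deriv k r) has_real_derivative - k * r * bessel_weight k r) (at r within s)"
proof -
  have "((\<lambda>r. 2 * ((k * r^2) * bessel_ser_deriv (k * r^2))) has_real_derivative
      2 * (- bessel_ser (k * r^2) / 4 * (k * (2 * r)))) (at r within s)"
    by (intro DERIV_cmult DERIV_chain2[OF bessel_ser_ode]) (auto intro!: derivative_eq_intros)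
  moreover have "(\<lambda>r. 2 * ((k * r^2) * bessel_ser_deriv (k * r^2))) = (\<lambda>r. r * bessel_weight_deriv k r)"
    by (auto simp: bessel_weight_deriv_def power2_eq_square)
  ultimately show ?thesis by (simp add: bessel_weight_def mult.assoc)
qed

lemma bessel_weight_pos:
  assumes R: "R > 0" and \<rho>: "0 < \<rho>" "\<rho> < r0" and r: "r \<in> {0..R}"
  shows "bessel_weight ((\<rho>/R)^2) r > 0"
proof -
  have "\<rho>/R * r \<le> \<rho>/R * R" using r R \<rho> by (intro mult_left_mono) auto
  then have "bessel_weight ((\<rho>/R)^2) r = J0 (\<rho>/R * r)" "0 \<le> \<rho>/R * r" "\<rho>/R * r < r0"
    using r R \<rho> unfolding bessel_weight_def J0_eq_bessel_ser
    by (auto simp: power_mult_distrib power_divide)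
  then show ?thesis using r0_pos_and_J0_pos_below(2) by simp
qed

lemma set_integral_nonneg:
  fixes f :: "real \<Rightarrow> real"
  assumes "\<And>x. x \<in> A \<Longrightarrow> 0 \<le> f x"
  shows "0 \<le> (LINT x:A|M. f x)"
  unfolding set_lebesgue_integral_def
  by (rule Bochner_Integration.integral_nonneg) (use assms in \<open>auto simp: indicator_def\<close>)

text \<open>Ground state substitution: with the positive radial eigenfunction \<open>w r = J0 (\<rho> r / R)\<close>
  and \<open>q = w' / w\<close>, the identity
  \<open>r \<phi>'\<^sup>2 - (\<rho>/R)\<^sup>2 r \<phi>\<^sup>2 = (r q \<phi>\<^sup>2)' + r (\<phi>' - q \<phi>)\<^sup>2\<close>
  integrates to the inequality, since \<open>\<phi>\<close> vanishes at both ends.\<close>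
lemma C1_0_weighted_poincare:
  fixes \<phi> \<phi>' :: "real \<Rightarrow> real"
  assumes C: "C1_0 R \<phi> \<phi>'" and R: "R > 0" and \<rho>: "0 < \<rho>" "\<rho> < r0"
  shows "(\<rho>/R)^2 * (LINT r:{0..R}|lborel. r * (\<phi> r)^2) \<le> (LINT r:{0..R}|lborel. r * (\<phi>' r)^2)"
proof -
  note CD = C1_0D[OF C]
  define k where "k = (\<rho>/R)^2"
  define w where "w = bessel_weight k"
  define w' where "w' = bessel_weight_deriv k"
  define q where "q r = w' r / w r" for r
  have w_pos: "w r > 0" if "r \<in> {0..R}" for r
    unfolding w_def k_def by (rule bessel_weight_pos[OF R \<rho> that])
  note wd = bessel_weight_has_derivative[of k, folded w_def w'_def]
  note md = bessel_weight_ode[of k, folded w_def w'_def]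
  define F where "F r = r * w' r * (\<phi> r)^2 / w r" for r
  define G where "G r = - k * r * (\<phi> r)^2 + 2 * r * q r * \<phi> r * \<phi>' r - r * (q r)^2 * (\<phi> r)^2" for r
  have Fd: "(F has_vector_derivative G x) (at x within {0..R})" if x: "x \<in> {0..R}" for x
  proof -
    have wx: "w x \<noteq> 0" using w_pos[OF x] by simp
    have "(F has_real_derivative
       (((- k * x * w x) * (\<phi> x)^2 + x * w' x * (2 * \<phi> x * \<phi>' x)) * w x
        - x * w' x * (\<phi> x)^2 * w' x) / (w x * w x)) (at x within {0..R})"
      unfolding F_def
      by (rule derivative_eq_intros refl md wd CD(2)[OF x] | simp add: wx)+
    moreover have "(((- k * x * w x) * (\<phi> x)^2 + x * w' x * (2 * \<phi> x * \<phi>' x)) * w x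
        - x * w' x * (\<phi> x)^2 * w' x) / (w x * w x) = G x"
      unfolding G_def q_def using wx by (simp add: field_simps power2_eq_square)
    ultimately show ?thesis by (simp add: has_real_derivative_iff_has_vector_derivative)
  qed
  have cq: "continuous_on {0..R} q"
    unfolding q_def w_def w'_def bessel_weight_def[abs_def] bessel_weight_deriv_def[abs_def]
    by (intro continuous_intros) (use w_pos in \<open>force simp: w_def bessel_weight_def\<close>)
  have cG: "continuous_on {0..R} G" unfolding G_def
    by (intro continuous_intros cq CD(1) CD(5))
  have "(LINT r:{0..R}|lborel. G r) = F R - F 0"
    unfolding set_lebesgue_integral_def
    by (rule integral_FTC_atLeastAtMost[OF _ Fd cG]) (use R in auto)
  then have intG: "(LINT r:{0..R}|lborel. G r) = 0"
    unfolding F_def using CD(3,4) by simp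
  define S where "S r = r * (\<phi>' r - q r * \<phi> r)^2" for r
  have "(LINT r:{0..R}|lborel. r * (\<phi>' r)^2) - k * (LINT r:{0..R}|lborel. r * (\<phi> r)^2)
      = (LINT r:{0..R}|lborel. G r + S r)"
    by (subst set_integral_mult_right[symmetric], subst set_integral_diff(2)[symmetric])
      (auto simp: G_def S_def power2_eq_square algebra_simps
        intro!: borel_integrable_atLeastAtMost' continuous_intros CD(1) CD(5) set_lebesgue_integral_cong)
  also have "\<dots> = (LINT r:{0..R}|lborel. S r)"
    by (subst set_integral_add(2)) (auto simp: intG S_def G_def
        intro!: borel_integrable_atLeastAtMost' continuous_intros cq CD(1) CD(5))
  also have "\<dots> \<ge> 0" unfolding S_def by (rule set_integral_nonneg) simp
  finally show ?thesis unfolding k_def by linarith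
qed


section \<open>The space \<open>H\<close>\<close>

lemma set_integral_le_lincomb:
  fixes f g h :: "real \<Rightarrow> real"
  assumes "set_integrable M A f" "set_integrable M A g" "set_integrable M A h"
    and "\<And>x. x \<in> A \<Longrightarrow> f x \<le> a * g x + b * h x"
  shows "(LINT x:A|M. f x) \<le> a * (LINT x:A|M. g x) + b * (LINT x:A|M. h x)"
proof -
  have "(LINT x:A|M. f x) \<le> (LINT x:A|M. a * g x + b * h x)"
    using assms by (intro set_integral_mono) auto
  also have "\<dots> = a * (LINT x:A|M. g x) + b * (LINT x:A|M. h x)"
    using assms by (simp add: set_integral_add set_integrable_mult_right)
  finally show ?thesis .
qed

lemma mult_le_sq_times_divide:
  fixes x y R :: real
  assumes "0 \<le> x" "x \<le> R" "0 \<le> y"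
  shows "x * y \<le> R^2 * (y / x)"
proof (cases "x = 0")
  case False
  have "x * x * y \<le> R * R * y" using assms by (intro mult_right_mono mult_mono) auto
  then show ?thesis using False assms by (simp add: power2_eq_square field_simps)
qed simp

lemma Hnorm_integrand_components:
  fixes f f' :: "real \<Rightarrow> real"
  assumes [measurable]: "f \<in> borel_measurable borel" "f' \<in> borel_measurable borel"
    and i: "set_integrable lborel {0..R} (\<lambda>r. r * (f' r)^2 + (f r)^2 / r)"
  shows "set_integrable lborel {0..R} (\<lambda>r. r * (f' r)^2)"
    "set_integrable lborel {0..R} (\<lambda>r. (f r)^2 / r)"
    "set_integrable lborel {0..R} (\<lambda>r. r * (f r)^2)"
    "Hnorm2 R f f' = (LINT r:{0..R}|lborel. r * (f' r)^2) + (LINT r:{0..R}|lborel. (f r)^2 / r)"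
    "(LINT r:{0..R}|lborel. r * (f r)^2) \<le> R^2 * (LINT r:{0..R}|lborel. (f r)^2 / r)"
proof -
  show i1: "set_integrable lborel {0..R} (\<lambda>r. r * (f' r)^2)"
    by (rule set_integrable_bound[OF i]) (auto simp: set_borel_measurable_def)
  show i2: "set_integrable lborel {0..R} (\<lambda>r. (f r)^2 / r)"
    by (rule set_integrable_bound[OF i]) (auto simp: set_borel_measurable_def)
  have le: "x * (f x)^2 \<le> R^2 * ((f x)^2 / x)" if "x \<in> {0..R}" for x
    using that by (intro mult_le_sq_times_divide) auto
  show i3: "set_integrable lborel {0..R} (\<lambda>r. r * (f r)^2)"
  proof (rule set_integrable_bound[OF set_integrable_mult_right[OF i2, of "R^2"]])
    show "AE x in lborel. x \<in> {0..R} \<longrightarrow> norm (x * (f x)^2) \<le> norm (R^2 * ((f x)^2 / x))"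
      using le by (intro AE_I2) (auto simp del: times_divide_eq_right)
  qed (auto simp: set_borel_measurable_def)
  show "Hnorm2 R f f' = (LINT r:{0..R}|lborel. r * (f' r)^2) + (LINT r:{0..R}|lborel. (f r)^2 / r)"
    unfolding Hnorm2_def by (rule set_integral_add(2)[OF i1 i2])
  have "(LINT r:{0..R}|lborel. r * (f r)^2) \<le> (LINT r:{0..R}|lborel. R^2 * ((f r)^2 / r))"
    by (rule set_integral_mono[OF i3 set_integrable_mult_right[OF i2]]) (rule le)
  also have "\<dots> = R^2 * (LINT r:{0..R}|lborel. (f r)^2 / r)"
    by (rule set_integral_mult_right)
  finally show "(LINT r:{0..R}|lborel. r * (f r)^2) \<le> R^2 * (LINT r:{0..R}|lborel. (f r)^2 / r)" .
qed

lemma Hnorm_integrand_bounds: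
  fixes f f' :: "real \<Rightarrow> real"
  assumes "f \<in> borel_measurable borel" "f' \<in> borel_measurable borel"
    and "set_integrable lborel {0..R} (\<lambda>r. r * (f' r)^2 + (f r)^2 / r)"
  shows "0 \<le> (LINT r:{0..R}|lborel. r * (f' r)^2)" "0 \<le> (LINT r:{0..R}|lborel. (f r)^2 / r)"
    "0 \<le> (LINT r:{0..R}|lborel. r * (f r)^2)"
    "(LINT r:{0..R}|lborel. r * (f' r)^2) \<le> Hnorm2 R f f'"
    "(LINT r:{0..R}|lborel. (f r)^2 / r) \<le> Hnorm2 R f f'"
    "(LINT r:{0..R}|lborel. r * (f r)^2) \<le> R^2 * Hnorm2 R f f'"
proof -
  note comps = Hnorm_integrand_components[OF assms]
  show "0 \<le> (LINT r:{0..R}|lborel. r * (f' r)^2)" "0 \<le> (LINT r:{0..R}|lborel. (f r)^2 / r)"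
    "0 \<le> (LINT r:{0..R}|lborel. r * (f r)^2)"
    by (auto intro: set_integral_nonneg)
  then show "(LINT r:{0..R}|lborel. r * (f' r)^2) \<le> Hnorm2 R f f'"
    "(LINT r:{0..R}|lborel. (f r)^2 / r) \<le> Hnorm2 R f f'"
    using comps(4) by linarith+
  then show "(LINT r:{0..R}|lborel. r * (f r)^2) \<le> R^2 * Hnorm2 R f f'"
    using comps(5) mult_left_mono[of _ _ "R^2"] by (meson order_trans zero_le_power2)
qed

lemma Hnorm_integrable_diff:
  fixes f f' g g' :: "real \<Rightarrow> real"
  assumes [measurable]: "f \<in> borel_measurable borel" "f' \<in> borel_measurable borel"
    "g \<in> borel_measurable borel" "g' \<in> borel_measurable borel"
    and "set_integrable lborel {0..R} (\<lambda>r. r * (f' r)^2 + (f r)^2 / r)"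
    and "set_integrable lborel {0..R} (\<lambda>r. r * (g' r)^2 + (g r)^2 / r)"
  shows "set_integrable lborel {0..R} (\<lambda>r. r * (f' r - g' r)^2 + (f r - g r)^2 / r)"
proof (rule set_integrable_bound)
  show "set_integrable lborel {0..R}
      (\<lambda>r. 2 * (r * (f' r)^2 + (f r)^2 / r) + 2 * (r * (g' r)^2 + (g r)^2 / r))"
    by (rule set_integral_add(1)[OF set_integrable_mult_right[OF assms(5)]
          set_integrable_mult_right[OF assms(6)]])
  show "set_borel_measurable lborel {0..R} (\<lambda>r. r * (f' r - g' r)^2 + (f r - g r)^2 / r)"
    unfolding set_borel_measurable_def by measurable
  have sq: "(a - b)^2 \<le> 2 * a^2 + 2 * b^2" for a b :: real
    using sum_squares_ge_zero[of "a + b" 0] by (simp add: power2_eq_square algebra_simps)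
  show "AE x in lborel. x \<in> {0..R} \<longrightarrow> norm (x * (f' x - g' x)^2 + (f x - g x)^2 / x)
      \<le> norm (2 * (x * (f' x)^2 + (f x)^2 / x) + 2 * (x * (g' x)^2 + (g x)^2 / x))"
  proof (rule AE_I2, rule impI)
    fix x :: real assume x: "x \<in> {0..R}"
    have "x * (f' x - g' x)^2 \<le> x * (2 * (f' x)^2 + 2 * (g' x)^2)"
      using x by (intro mult_left_mono sq) auto
    moreover have "(f x - g x)^2 / x \<le> (2 * (f x)^2 + 2 * (g x)^2) / x"
      using x by (intro divide_right_mono sq) auto
    ultimately show "norm (x * (f' x - g' x)^2 + (f x - g x)^2 / x)
        \<le> norm (2 * (x * (f' x)^2 + (f x)^2 / x) + 2 * (x * (g' x)^2 + (g x)^2 / x))"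
      using x by (simp add: add_divide_distrib algebra_simps)
  qed
qed

lemma HspaceD:
  assumes "(u, u') \<in> Hspace R"
  shows "u \<in> borel_measurable borel" "u' \<in> borel_measurable borel"
    "set_integrable lborel {0..R} (\<lambda>r. r * (u' r)^2 + (u r)^2 / r)"
  using assms unfolding Hspace_def by auto

lemma C1_0_abs_le_linear:
  assumes C: "C1_0 R \<phi> \<phi>'"
  obtains M where "\<And>x. x \<in> {0..R} \<Longrightarrow> \<bar>\<phi> x\<bar> \<le> M * x"
proof -
  note CD = C1_0D[OF C]
  obtain B where B: "\<forall>y\<in>\<phi>' ` {0..R}. norm y \<le> B"
    using compact_imp_bounded[OF compact_continuous_image[OF CD(1) compact_Icc]] bounded_iff
    by metis
  have "\<bar>\<phi> x\<bar> \<le> B * x" if x: "x \<in> {0..R}" for x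
  proof -
    have "norm (\<phi> x - \<phi> 0) \<le> B * norm (x - 0)"
      by (rule field_differentiable_bound[of "{0..R}" \<phi> \<phi>']) (use CD(2) B x in auto)
    then show ?thesis using CD(3) x by simp
  qed
  then show ?thesis by (rule that)
qed

lemma C1_0_Hnorm_integrable:
  assumes C: "C1_0 R \<phi> \<phi>'"
  shows "set_integrable lborel {0..R} (\<lambda>r. r * (\<phi>' r)^2 + (\<phi> r)^2 / r)"
proof -
  note CD = C1_0D[OF C]
  obtain M where M: "\<And>x. x \<in> {0..R} \<Longrightarrow> \<bar>\<phi> x\<bar> \<le> M * x" using C1_0_abs_le_linear[OF C] by blast
  have "set_borel_measurable lborel {0..R} (\<lambda>r. (\<phi> r)^2 / r)"
  proof -
    have "(\<lambda>x. indicator {0..R} x * \<phi> x) \<in> borel_measurable lborel"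
      using set_measurable_continuous_on[OF _ CD(5)] unfolding set_borel_measurable_def by simp
    then have "(\<lambda>x. (indicator {0..R} x * \<phi> x)^2 / x) \<in> borel_measurable lborel"
      by measurable
    moreover have "(\<lambda>x. (indicator {0..R} x * \<phi> x)^2 / x)
        = (\<lambda>x. indicator {0..R} x *\<^sub>R ((\<phi> x)^2 / x))"
      by (auto simp: indicator_def)
    ultimately show ?thesis unfolding set_borel_measurable_def by simp
  qed
  moreover have "norm ((\<phi> x)^2 / x) \<le> norm (M^2 * R)" if x: "x \<in> {0..R}" for x
  proof -
    have "\<bar>\<phi> x\<bar>^2 \<le> (M * x)^2" using M[OF x] by (intro power_mono) auto
    then have "(\<phi> x)^2 / x \<le> M^2 * x"
      using x by (cases "x = 0") (auto simp: divide_le_eq power2_eq_square mult_ac)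
    also have "\<dots> \<le> M^2 * R" using x by (intro mult_left_mono) auto
    finally show ?thesis using x by simp
  qed
  ultimately have "set_integrable lborel {0..R} (\<lambda>r. (\<phi> r)^2 / r)"
    by (intro set_integrable_bound[OF borel_integrable_atLeastAtMost'[OF continuous_on_const[of _ "M^2 * R"]]]
        AE_I2 impI)
  moreover have "set_integrable lborel {0..R} (\<lambda>r. r * (\<phi>' r)^2)"
    by (intro borel_integrable_atLeastAtMost' continuous_intros CD(1))
  ultimately show ?thesis by (rule set_integral_add(1)[rotated])
qed

text \<open>Pointwise control by the norm: \<open>\<phi>(x)\<^sup>2 = \<integral>\<^sub>0\<^sup>x 2 \<phi> \<phi>'\<close> and
  \<open>2 \<phi> \<phi>' \<le> r \<phi>'\<^sup>2 + \<phi>\<^sup>2 / r\<close>.\<close>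
lemma C1_0_sq_le_Hnorm2:
  assumes C: "C1_0 R \<phi> \<phi>'" and x: "x \<in> {0..R}"
  shows "(\<phi> x)^2 \<le> Hnorm2 R \<phi> \<phi>'"
proof -
  note CD = C1_0D[OF C]
  define g where "g r = r * (\<phi>' r)^2 + (\<phi> r)^2 / r" for r
  have ig: "set_integrable lborel {0..R} g" unfolding g_def by (rule C1_0_Hnorm_integrable[OF C])
  have sub: "{0..x} \<subseteq> {0..R}" using x by auto
  have ig2: "set_integrable lborel {0..x} g" by (rule set_integrable_subset[OF ig _ sub]) simp
  have cont: "continuous_on {0..x} (\<lambda>r. 2 * \<phi> r * \<phi>' r)"
    by (intro continuous_intros continuous_on_subset[OF CD(1) sub] continuous_on_subset[OF CD(5) sub])
  have "(LINT r:{0..x}|lborel. 2 * \<phi> r * \<phi>' r) = (\<phi> x)^2 - (\<phi> 0)^2"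
    unfolding set_lebesgue_integral_def
  proof (rule integral_FTC_atLeastAtMost[OF _ _ cont])
    fix y assume y: "0 \<le> y" "y \<le> x"
    then have yin: "y \<in> {0..R}" using x by auto
    have "((\<lambda>r. (\<phi> r)^2) has_real_derivative (2 * \<phi> y * \<phi>' y)) (at y within {0..x})"
      by (rule derivative_eq_intros has_field_derivative_subset[OF CD(2)[OF yin] sub] refl | simp)+
    then show "((\<lambda>r. (\<phi> r)^2) has_vector_derivative 2 * \<phi> y * \<phi>' y) (at y within {0..x})"
      by (simp add: has_real_derivative_iff_has_vector_derivative)
  qed (use x in auto)
  then have "(\<phi> x)^2 = (LINT r:{0..x}|lborel. 2 * \<phi> r * \<phi>' r)" using CD(3) by simp
  also have "\<dots> \<le> (LINT r:{0..x}|lborel. g r)"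
  proof (rule set_integral_mono[OF borel_integrable_atLeastAtMost'[OF cont] ig2])
    fix r assume r: "r \<in> {0..x}"
    show "2 * \<phi> r * \<phi>' r \<le> g r"
    proof (cases "r = 0")
      case True then show ?thesis using CD(3) by (simp add: g_def)
    next
      case False
      then have "0 \<le> (\<phi> r - r * \<phi>' r)^2 / r" using r by simp
      also have "(\<phi> r - r * \<phi>' r)^2 / r = g r - 2 * \<phi> r * \<phi>' r"
        unfolding g_def using False by (simp add: field_simps power2_eq_square)
      finally show ?thesis by simp
    qed
  qed
  also have "\<dots> \<le> (LINT r:{0..R}|lborel. g r)"
    unfolding set_lebesgue_integral_def
  proof (rule integral_mono)
    show "integrable lborel (\<lambda>r. indicator {0..x} r *\<^sub>R g r)"
      using ig2 unfolding set_integrable_def .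
    show "integrable lborel (\<lambda>r. indicator {0..R} r *\<^sub>R g r)"
      using ig unfolding set_integrable_def .
    fix r show "indicator {0..x} r *\<^sub>R g r \<le> indicator {0..R} r *\<^sub>R g r"
      using sub by (auto simp: indicator_def g_def)
  qed
  finally show ?thesis unfolding Hnorm2_def g_def .
qed

text \<open>\<open>C1_0\<close> constrains a function only on \<open>[0, R]\<close>; cutting it off outside makes it
  Borel measurable without changing any of the integrals.\<close>
lemma C1_0_restrict:
  assumes C: "C1_0 R \<phi> \<phi>'" and R: "R > 0"
  shows "C1_0 R (\<lambda>x. indicator {0..R} x * \<phi> x) (\<lambda>x. indicator {0..R} x * \<phi>' x)"
    "(\<lambda>x. indicator {0..R} x * \<phi> x) \<in> borel_measurable borel"
    "(\<lambda>x. indicator {0..R} x * \<phi>' x) \<in> borel_measurable borel"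
proof -
  note CD = C1_0D[OF C]
  show "(\<lambda>x. indicator {0..R} x * \<phi> x) \<in> borel_measurable borel"
    "(\<lambda>x. indicator {0..R} x * \<phi>' x) \<in> borel_measurable borel"
    using set_measurable_continuous_on[OF _ CD(5)] set_measurable_continuous_on[OF _ CD(1)]
    unfolding set_borel_measurable_def by simp_all
  have "continuous_on {0..R} (\<lambda>x. indicator {0..R} x * \<phi>' x)"
    using CD(1) by (rule continuous_on_cong[THEN iffD1, rotated 2]) auto
  moreover have "((\<lambda>x. indicator {0..R} x * \<phi> x) has_real_derivative indicator {0..R} x * \<phi>' x)
      (at x within {0..R})" if x: "x \<in> {0..R}" for x
    using has_field_derivative_transform_within[OF CD(2)[OF x] zero_less_one x] x by simp
  ultimately show "C1_0 R (\<lambda>x. indicator {0..R} x * \<phi> x) (\<lambda>x. indicator {0..R} x * \<phi>' x)"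
    unfolding C1_0_def using CD(3,4) R by auto
qed

lemma AE_subseq_if_weighted_sq_integral_tendsto_0:
  fixes f :: "nat \<Rightarrow> real \<Rightarrow> real" and g :: "real \<Rightarrow> real"
  assumes int: "\<And>k. set_integrable lborel {0..R} (\<lambda>x. (f k x - g x)^2 / x)"
    and lim: "(\<lambda>k. LINT x:{0..R}|lborel. (f k x - g x)^2 / x) \<longlonglongrightarrow> 0"
  obtains s :: "nat \<Rightarrow> nat" where "strict_mono s"
    "AE x in lborel. x \<in> {0..R} \<longrightarrow> (\<lambda>n. f (s n) x) \<longlonglongrightarrow> g x"
proof -
  define h where "h k x = indicator {0..R} x *\<^sub>R ((f k x - g x)^2 / x)" for k x
  have "(\<integral>x. norm (h k x) \<partial>lborel) = (LINT x:{0..R}|lborel. (f k x - g x)^2 / x)" for k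
    unfolding set_lebesgue_integral_def h_def
    by (rule Bochner_Integration.integral_cong) (auto simp: indicator_def)
  then obtain s :: "nat \<Rightarrow> nat" where s: "strict_mono s"
    and ae: "AE x in lborel. (\<lambda>n. h (s n) x) \<longlonglongrightarrow> 0"
    using tendsto_L1_AE_subseq[of lborel h] int lim
    unfolding set_integrable_def h_def[abs_def] by auto
  have "AE x in lborel. x \<in> {0..R} \<longrightarrow> (\<lambda>n. f (s n) x) \<longlonglongrightarrow> g x"
    using ae AE_lborel_singleton[of 0]
  proof eventually_elim
    case (elim x)
    show ?case
    proof
      assume x: "x \<in> {0..R}"
      have "(\<lambda>n. x * h (s n) x) \<longlonglongrightarrow> x * 0" by (intro tendsto_intros elim(1))
      moreover have "x * h (s n) x = \<bar>f (s n) x - g x\<bar>^2" for n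
        using x elim(2) by (simp add: h_def)
      ultimately have "(\<lambda>n. sqrt (\<bar>f (s n) x - g x\<bar>^2)) \<longlonglongrightarrow> sqrt 0"
        by (intro tendsto_real_sqrt) simp
      then have "(\<lambda>n. f (s n) x - g x) \<longlonglongrightarrow> 0" by (simp add: tendsto_rabs_zero_iff)
      then show "(\<lambda>n. f (s n) x) \<longlonglongrightarrow> g x" by (rule LIM_zero_cancel)
    qed
  qed
  with s show ?thesis by (rule that)
qed

lemma Hspace_approx_ae:
  assumes H: "(u, u') \<in> Hspace R" and R: "R > 0"
  obtains \<psi> \<psi>' where "\<And>k. C1_0 R (\<psi> k) (\<psi>' k)"
    "\<And>k. \<psi> k \<in> borel_measurable borel" "\<And>k. \<psi>' k \<in> borel_measurable borel"
    "(\<lambda>k. Hnorm2 R (\<lambda>r. \<psi> k r - u r) (\<lambda>r. \<psi>' k r - u' r)) \<longlonglongrightarrow> 0"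
    "AE x in lborel. x \<in> {0..R} \<longrightarrow> (\<lambda>k. \<psi> k x) \<longlonglongrightarrow> u x"
proof -
  obtain \<phi> \<phi>' where C: "\<And>k. C1_0 R (\<phi> k) (\<phi>' k)"
    and lim: "(\<lambda>k. Hnorm2 R (\<lambda>r. \<phi> k r - u r) (\<lambda>r. \<phi>' k r - u' r)) \<longlonglongrightarrow> 0"
    using H unfolding Hspace_def by auto
  define v where "v k = (\<lambda>x. indicator {0..R} x * \<phi> k x)" for k
  define v' where "v' k = (\<lambda>x. indicator {0..R} x * \<phi>' k x)" for k
  have Cv: "C1_0 R (v k) (v' k)" and [measurable]: "v k \<in> borel_measurable borel"
    "v' k \<in> borel_measurable borel" for k
    unfolding v_def v'_def using C1_0_restrict[OF C R] by auto
  note [measurable] = HspaceD(1,2)[OF H]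
  define d where "d k = Hnorm2 R (\<lambda>r. v k r - u r) (\<lambda>r. v' k r - u' r)" for k
  have "d = (\<lambda>k. Hnorm2 R (\<lambda>r. \<phi> k r - u r) (\<lambda>r. \<phi>' k r - u' r))"
    unfolding d_def Hnorm2_def v_def v'_def by (intro ext set_lebesgue_integral_cong) auto
  with lim have d: "d \<longlonglongrightarrow> 0" by simp
  have idiff: "set_integrable lborel {0..R}
      (\<lambda>r. r * (v' k r - u' r)^2 + (v k r - u r)^2 / r)" for k
    by (rule Hnorm_integrable_diff[OF _ _ _ _ C1_0_Hnorm_integrable[OF Cv] HspaceD(3)[OF H]])
      auto
  have comps: "set_integrable lborel {0..R} (\<lambda>x. (v k x - u x)^2 / x)"
    "0 \<le> (LINT x:{0..R}|lborel. (v k x - u x)^2 / x)"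
    "(LINT x:{0..R}|lborel. (v k x - u x)^2 / x) \<le> d k" for k
    using Hnorm_integrand_components(2)[OF _ _ idiff] Hnorm_integrand_bounds(2,5)[OF _ _ idiff]
    unfolding d_def by auto
  have "(\<lambda>k. LINT x:{0..R}|lborel. (v k x - u x)^2 / x) \<longlonglongrightarrow> 0"
    by (rule tendsto_sandwich[OF _ _ tendsto_const d]) (use comps(2,3) in auto)
  then obtain s :: "nat \<Rightarrow> nat" where s: "strict_mono s"
    and ae: "AE x in lborel. x \<in> {0..R} \<longrightarrow> (\<lambda>n. v (s n) x) \<longlonglongrightarrow> u x"
    by (rule AE_subseq_if_weighted_sq_integral_tendsto_0[where f = v and g = u, OF comps(1)]) blast
  have "(\<lambda>n. d (s n)) \<longlonglongrightarrow> 0" using LIMSEQ_subseq_LIMSEQ[OF d s] by (simp add: o_def)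
  with ae show ?thesis
    using that[of "\<lambda>n. v (s n)" "\<lambda>n. v' (s n)"] Cv unfolding d_def by auto
qed

lemma sq_le_eps_combination:
  fixes a b e :: real
  assumes "e > 0"
  shows "a^2 \<le> (1 + e) * b^2 + (1 + 1/e) * (a - b)^2"
proof -
  have "0 \<le> (e * b - (a - b))^2 / e" using assms by simp
  also have "(e * b - (a - b))^2 / e = (1 + e) * b^2 + (1 + 1/e) * (a - b)^2 - a^2"
    using assms by (simp add: field_simps power2_eq_square)
  finally show ?thesis by simp
qed

lemma tendsto_le_if_eps_bound:
  fixes a d :: "nat \<Rightarrow> real" and B :: "real \<Rightarrow> real"
  assumes a: "a \<longlonglongrightarrow> a0" and d: "d \<longlonglongrightarrow> 0" and X: "X \<ge> 0"
    and bound: "\<And>e k. e > 0 \<Longrightarrow> a k \<le> (1 + e)^2 * X + B e * d k"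
  shows "a0 \<le> X"
proof (rule field_le_epsilon)
  fix t :: real assume t: "t > 0"
  define e where "e = min 1 (t / (3 * X + 1))"
  have e: "e > 0" "e \<le> 1" "e * (3 * X + 1) \<le> t"
    unfolding e_def using t X by (auto simp: min_def le_divide_eq)
  have "e * X \<le> 1 * X" using e(2) X by (rule mult_right_mono)
  then have eX: "(2 + e) * X \<le> 3 * X + 1" by (simp add: algebra_simps)
  have "(\<lambda>k. (1 + e)^2 * X + B e * d k) \<longlonglongrightarrow> (1 + e)^2 * X + B e * 0"
    by (intro tendsto_intros d)
  then have "a0 \<le> (1 + e)^2 * X"
    using tendsto_le[OF trivial_limit_sequentially _ a] bound[OF e(1)] by fastforce
  also have "\<dots> = X + e * ((2 + e) * X)" by (simp add: power2_eq_square algebra_simps)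
  also have "\<dots> \<le> X + e * (3 * X + 1)"
    using e eX by (intro add_left_mono mult_left_mono) auto
  finally show "a0 \<le> X + t" using e by linarith
qed

lemma Hspace_approx_weighted_L2_estimate:
  assumes H: "(u, u') \<in> Hspace R" and C: "C1_0 R \<psi> \<psi>'"
    and [measurable]: "\<psi> \<in> borel_measurable borel" "\<psi>' \<in> borel_measurable borel"
    and e: "e > 0"
  shows "(LINT r:{0..R}|lborel. r * (u r)^2) \<le> (1 + e) * (LINT r:{0..R}|lborel. r * (\<psi> r)^2)
    + (1 + 1/e) * (R^2 * Hnorm2 R (\<lambda>r. \<psi> r - u r) (\<lambda>r. \<psi>' r - u' r))"
proof -
  note mu [measurable] = HspaceD(1,2)[OF H]
  have md: "(\<lambda>r. \<psi> r - u r) \<in> borel_measurable borel" "(\<lambda>r. \<psi>' r - u' r) \<in> borel_measurable borel"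
    by measurable
  note id = Hnorm_integrable_diff[OF assms(3,4) mu C1_0_Hnorm_integrable[OF C] HspaceD(3)[OF H]]
  have "(LINT r:{0..R}|lborel. r * (u r)^2) \<le> (1 + e) * (LINT r:{0..R}|lborel. r * (\<psi> r)^2)
      + (1 + 1/e) * (LINT r:{0..R}|lborel. r * (\<psi> r - u r)^2)"
  proof (rule set_integral_le_lincomb)
    show "set_integrable lborel {0..R} (\<lambda>r. r * (u r)^2)"
      "set_integrable lborel {0..R} (\<lambda>r. r * (\<psi> r)^2)"
      "set_integrable lborel {0..R} (\<lambda>r. r * (\<psi> r - u r)^2)"
      by (rule Hnorm_integrand_components(3)[OF mu HspaceD(3)[OF H]]
          Hnorm_integrand_components(3)[OF assms(3,4) C1_0_Hnorm_integrable[OF C]]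
          Hnorm_integrand_components(3)[OF md id])+
    fix r :: real assume "r \<in> {0..R}"
    then show "r * (u r)^2 \<le> (1 + e) * (r * (\<psi> r)^2) + (1 + 1/e) * (r * (\<psi> r - u r)^2)"
      using mult_left_mono[OF sq_le_eps_combination[OF e, of "u r" "\<psi> r"], of r]
      by (simp add: power2_commute algebra_simps)
  qed
  also have "\<dots> \<le> (1 + e) * (LINT r:{0..R}|lborel. r * (\<psi> r)^2)
      + (1 + 1/e) * (R^2 * Hnorm2 R (\<lambda>r. \<psi> r - u r) (\<lambda>r. \<psi>' r - u' r))"
    using Hnorm_integrand_bounds(6)[OF md id] e by (intro add_left_mono mult_left_mono) auto
  finally show ?thesis .
qed

lemma Hspace_approx_Hnorm_estimates:
  assumes H: "(u, u') \<in> Hspace R" and C: "C1_0 R \<psi> \<psi>'"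
    and [measurable]: "\<psi> \<in> borel_measurable borel" "\<psi>' \<in> borel_measurable borel"
    and e: "e > 0"
  defines "d \<equiv> Hnorm2 R (\<lambda>r. \<psi> r - u r) (\<lambda>r. \<psi>' r - u' r)"
  shows "(LINT r:{0..R}|lborel. r * (\<psi>' r)^2)
      \<le> (1 + e) * (LINT r:{0..R}|lborel. r * (u' r)^2) + (1 + 1/e) * d"
    "Hnorm2 R \<psi> \<psi>' \<le> (1 + e) * Hnorm2 R u u' + (1 + 1/e) * d"
proof -
  note mu [measurable] = HspaceD(1,2)[OF H]
  have md: "(\<lambda>r. \<psi> r - u r) \<in> borel_measurable borel" "(\<lambda>r. \<psi>' r - u' r) \<in> borel_measurable borel"
    by measurable
  note id = Hnorm_integrable_diff[OF assms(3,4) mu C1_0_Hnorm_integrable[OF C] HspaceD(3)[OF H]]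
  note cu = Hnorm_integrand_components[OF mu HspaceD(3)[OF H]]
  note c\<psi> = Hnorm_integrand_components[OF assms(3,4) C1_0_Hnorm_integrable[OF C]]
  note cd = Hnorm_integrand_components[OF md id, folded d_def]
  have P: "(LINT r:{0..R}|lborel. r * (\<psi>' r)^2)
      \<le> (1 + e) * (LINT r:{0..R}|lborel. r * (u' r)^2)
        + (1 + 1/e) * (LINT r:{0..R}|lborel. r * (\<psi>' r - u' r)^2)"
  proof (rule set_integral_le_lincomb[OF c\<psi>(1) cu(1) cd(1)])
    fix r :: real assume "r \<in> {0..R}"
    then show "r * (\<psi>' r)^2 \<le> (1 + e) * (r * (u' r)^2) + (1 + 1/e) * (r * (\<psi>' r - u' r)^2)"
      using mult_left_mono[OF sq_le_eps_combination[OF e, of "\<psi>' r" "u' r"], of r]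
      by (simp add: algebra_simps)
  qed
  then show "(LINT r:{0..R}|lborel. r * (\<psi>' r)^2)
      \<le> (1 + e) * (LINT r:{0..R}|lborel. r * (u' r)^2) + (1 + 1/e) * d"
  proof -
    have "(1 + 1/e) * (LINT r:{0..R}|lborel. r * (\<psi>' r - u' r)^2) \<le> (1 + 1/e) * d"
      using Hnorm_integrand_bounds(4)[OF md id, folded d_def] e by (intro mult_left_mono) auto
    then show ?thesis using P by linarith
  qed
  have W: "(LINT r:{0..R}|lborel. (\<psi> r)^2 / r)
      \<le> (1 + e) * (LINT r:{0..R}|lborel. (u r)^2 / r)
        + (1 + 1/e) * (LINT r:{0..R}|lborel. (\<psi> r - u r)^2 / r)"
  proof (rule set_integral_le_lincomb[OF c\<psi>(2) cu(2) cd(2)])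
    fix r :: real assume "r \<in> {0..R}"
    then show "(\<psi> r)^2 / r \<le> (1 + e) * ((u r)^2 / r) + (1 + 1/e) * ((\<psi> r - u r)^2 / r)"
      using divide_right_mono[OF sq_le_eps_combination[OF e, of "\<psi> r" "u r"], of r]
      by (simp add: add_divide_distrib)
  qed
  show "Hnorm2 R \<psi> \<psi>' \<le> (1 + e) * Hnorm2 R u u' + (1 + 1/e) * d"
    unfolding c\<psi>(4) cu(4) cd(4) using P W by (simp add: algebra_simps)
qed

lemma Hspace_weighted_poincare:
  assumes H: "(u, u') \<in> Hspace R" and R: "R > 0" and \<rho>: "0 < \<rho>" "\<rho> < r0"
  shows "(\<rho>/R)^2 * (LINT r:{0..R}|lborel. r * (u r)^2) \<le> (LINT r:{0..R}|lborel. r * (u' r)^2)"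
proof -
  obtain \<psi> \<psi>' where C: "\<And>k. C1_0 R (\<psi> k) (\<psi>' k)"
    and m: "\<And>k. \<psi> k \<in> borel_measurable borel" "\<And>k. \<psi>' k \<in> borel_measurable borel"
    and d: "(\<lambda>k. Hnorm2 R (\<lambda>r. \<psi> k r - u r) (\<lambda>r. \<psi>' k r - u' r)) \<longlonglongrightarrow> 0"
    by (rule Hspace_approx_ae[OF H R]) blast
  define c where "c = (\<rho>/R)^2"
  define L where "L = (LINT r:{0..R}|lborel. r * (u r)^2)"
  define P where "P = (LINT r:{0..R}|lborel. r * (u' r)^2)"
  have c: "c \<ge> 0" unfolding c_def by simp
  show ?thesis unfolding c_def[symmetric] L_def[symmetric] P_def[symmetric]
  proof (rule tendsto_le_if_eps_bound[OF tendsto_const d])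
    show "P \<ge> 0" unfolding P_def by (rule set_integral_nonneg) auto
    fix e :: real and k :: nat assume e: "e > 0"
    define d where "d = Hnorm2 R (\<lambda>r. \<psi> k r - u r) (\<lambda>r. \<psi>' k r - u' r)"
    define L\<psi> where "L\<psi> = (LINT r:{0..R}|lborel. r * (\<psi> k r)^2)"
    define P\<psi> where "P\<psi> = (LINT r:{0..R}|lborel. r * (\<psi>' k r)^2)"
    have est: "L \<le> (1 + e) * L\<psi> + (1 + 1/e) * (R^2 * d)" "P\<psi> \<le> (1 + e) * P + (1 + 1/e) * d"
      unfolding d_def L_def P_def L\<psi>_def P\<psi>_def
      by (rule Hspace_approx_weighted_L2_estimate[OF H C m(1,2) e]
          Hspace_approx_Hnorm_estimates(1)[OF H C m(1,2) e])+
    have e1: "1 + e \<ge> 0" "1 + 1/e \<ge> 0" using e by auto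
    have "c * L\<psi> \<le> P\<psi>"
      unfolding c_def L\<psi>_def P\<psi>_def by (rule C1_0_weighted_poincare[OF C R \<rho>])
    then have poinc: "c * L\<psi> \<le> (1 + e) * P + (1 + 1/e) * d" using est(2) by linarith
    have "c * L \<le> c * ((1 + e) * L\<psi> + (1 + 1/e) * (R^2 * d))"
      using mult_left_mono[OF est(1) c] .
    also have "\<dots> = (1 + e) * (c * L\<psi>) + (1 + 1/e) * c * R^2 * d"
      by (simp add: algebra_simps)
    also have "\<dots> \<le> (1 + e) * ((1 + e) * P + (1 + 1/e) * d) + (1 + 1/e) * c * R^2 * d"
      using poinc e1 by (intro add_right_mono mult_left_mono) auto
    also have "\<dots> = (1 + e)^2 * P + ((1 + e) * (1 + 1/e) + (1 + 1/e) * c * R^2) * d"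
      by (simp add: power2_eq_square algebra_simps)
    finally show "c * L \<le> (1 + e)^2 * P + ((1 + e) * (1 + 1/e) + (1 + 1/e) * c * R^2) * d" .
  qed
qed

lemma Hspace_sq_le_Hnorm2:
  assumes H: "(u, u') \<in> Hspace R" and R: "R > 0"
  shows "AE x in lborel. x \<in> {0..R} \<longrightarrow> (u x)^2 \<le> Hnorm2 R u u'"
proof -
  obtain \<psi> \<psi>' where C: "\<And>k. C1_0 R (\<psi> k) (\<psi>' k)"
    and m: "\<And>k. \<psi> k \<in> borel_measurable borel" "\<And>k. \<psi>' k \<in> borel_measurable borel"
    and d: "(\<lambda>k. Hnorm2 R (\<lambda>r. \<psi> k r - u r) (\<lambda>r. \<psi>' k r - u' r)) \<longlonglongrightarrow> 0"
    and ae: "AE x in lborel. x \<in> {0..R} \<longrightarrow> (\<lambda>k. \<psi> k x) \<longlonglongrightarrow> u x"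
    by (rule Hspace_approx_ae[OF H R]) blast
  have N: "Hnorm2 R u u' \<ge> 0"
    unfolding Hnorm2_def by (rule set_integral_nonneg) auto
  show ?thesis
    using ae
  proof eventually_elim
    case (elim x)
    show ?case
    proof
      assume x: "x \<in> {0..R}"
      show "(u x)^2 \<le> Hnorm2 R u u'"
      proof (rule tendsto_le_if_eps_bound[OF tendsto_power[OF elim[rule_format, OF x]] d N])
        fix e :: real and k :: nat assume e: "e > 0"
        have "(1 + e) * Hnorm2 R u u' \<le> (1 + e)^2 * Hnorm2 R u u'"
          using e N by (intro mult_right_mono) (auto simp: power2_eq_square)
        then show "(\<psi> k x)^2 \<le> (1 + e)^2 * Hnorm2 R u u'
            + (1 + 1/e) * Hnorm2 R (\<lambda>r. \<psi> k r - u r) (\<lambda>r. \<psi>' k r - u' r)"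
          using C1_0_sq_le_Hnorm2[OF C[of k] x] Hspace_approx_Hnorm_estimates(2)[OF H C m(1,2) e, of k]
          by linarith
      qed
    qed
  qed
qed


section \<open>The functional along rays\<close>

text \<open>Along the ray through \<open>u\<close>, the non-quadratic part of the integrand of \<open>\<gamma>\<^sub>\<kappa>\<close> is
  \<open>2\<alpha>\<^sup>-\<^sup>1 r (s\<^sup>2u\<^sup>2 / (1 + \<alpha> s\<^sup>2u\<^sup>2) - s\<^sup>2u\<^sup>2) = -2 r nonlin \<alpha> s (u\<^sup>2)\<close>;
  \<open>nonlin_deriv \<alpha> v\<close> is the derivative of \<open>nonlin \<alpha> s v\<close> in \<open>s\<close> at \<open>s = 1\<close>.\<close>
definition nonlin :: "real \<Rightarrow> real \<Rightarrow> real \<Rightarrow> real" where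
  "nonlin \<alpha> s v = s^4 * v^2 / (1 + \<alpha> * s^2 * v)"

definition nonlin_deriv :: "real \<Rightarrow> real \<Rightarrow> real" where
  "nonlin_deriv \<alpha> v = (4 * v^2 + 2 * \<alpha> * v^3) / (1 + \<alpha> * v)^2"

lemma nonlin_taylor_normalized:
  fixes a t :: real
  assumes a: "a \<ge> 0" and t: "\<bar>t\<bar> \<le> 1/2"
  shows "\<bar>(1+t)^4 * a^2 / (1 + a * (1+t)^2) - a^2 / (1 + a) - t * ((4 * a^2 + 2 * a^3) / (1 + a)^2)\<bar>
    \<le> t^2 * (a + 4)"
proof -
  define s where "s = 1 + t"
  have s: "s > 0" "s \<le> 3/2" using t unfolding s_def by auto
  define X where "X = 1 + a * s^2"
  define Y where "Y = 1 + a"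
  have X: "X \<ge> 1" unfolding X_def using a by simp
  have Y: "Y \<ge> 1" unfolding Y_def using a by simp
  have Xn: "X \<noteq> 0" and Yn: "Y \<noteq> 0" using X Y by auto
  have l: "s^4 * a^2 / X - a^2 / Y - t * ((4 * a^2 + 2 * a^3) / Y^2)
      = (s^4 * a^2 * Y^2 - a^2 * Y * X - t * (4 * a^2 + 2 * a^3) * X) / (Y^2 * X)"
    using Xn Yn by (simp add: field_simps power2_eq_square)
  have r: "a * t^2 - t^2 * (a * (1 - a * (1 + 2 * s))) / (Y^2 * X)
      = (a * t^2 * Y^2 * X - t^2 * (a * (1 - a * (1 + 2 * s)))) / (Y^2 * X)"
    using Xn Yn by (simp add: field_simps power2_eq_square)
  have num: "s^4 * a^2 * Y^2 - a^2 * Y * X - t * (4 * a^2 + 2 * a^3) * X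
      = a * t^2 * Y^2 * X - t^2 * (a * (1 - a * (1 + 2 * s)))"
    unfolding X_def Y_def s_def by algebra
  have eq: "s^4 * a^2 / X - a^2 / Y - t * ((4 * a^2 + 2 * a^3) / Y^2)
      = a * t^2 - t^2 * (a * (1 - a * (1 + 2 * s))) / (Y^2 * X)"
    unfolding l r num ..
  have "\<bar>a * (1 - a * (1 + 2 * s))\<bar> \<le> a * (1 + a * (1 + 2 * s))"
    using a s by (simp add: abs_mult abs_le_iff mult_left_mono)
  also have "\<dots> \<le> a * (1 + a * 4)" using a s by (intro mult_left_mono add_left_mono) auto
  also have "\<dots> \<le> 4 * Y^2" unfolding Y_def using a by (simp add: power2_eq_square algebra_simps)
  also have "\<dots> \<le> 4 * (Y^2 * X)" using X Y by simp
  finally have b: "\<bar>a * (1 - a * (1 + 2 * s))\<bar> \<le> 4 * (Y^2 * X)" .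
  have pos: "Y^2 * X > 0" using X Y by simp
  have "\<bar>t^2 * (a * (1 - a * (1 + 2 * s))) / (Y^2 * X)\<bar>
      = t^2 * (\<bar>a * (1 - a * (1 + 2 * s))\<bar> / (Y^2 * X))"
    using pos X by (simp add: abs_mult abs_divide)
  also have "\<dots> \<le> t^2 * 4"
    using b pos by (intro mult_left_mono) (auto simp: divide_le_eq)
  finally have "\<bar>a * t^2 - t^2 * (a * (1 - a * (1 + 2 * s))) / (Y^2 * X)\<bar> \<le> t^2 * (a + 4)"
    using a abs_triangle_ineq4[of "a * t^2" "t^2 * (a * (1 - a * (1 + 2 * s))) / (Y^2 * X)"]
    by (simp add: algebra_simps)
  then show ?thesis using eq unfolding s_def X_def Y_def by (simp add: mult.commute)
qed

lemma nonlin_taylor: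
  fixes \<alpha> v t :: real
  assumes al: "\<alpha> > 0" and v: "v \<ge> 0" and t: "\<bar>t\<bar> \<le> 1/2"
  shows "\<bar>nonlin \<alpha> (1+t) v - nonlin \<alpha> 1 v - t * nonlin_deriv \<alpha> v\<bar> \<le> t^2 * (v / \<alpha> + 4 / \<alpha>^2)"
proof -
  define a where "a = \<alpha> * v"
  have a: "a \<ge> 0" unfolding a_def using al v by simp
  have e1: "nonlin \<alpha> s v = (s^4 * a^2 / (1 + a * s^2)) / \<alpha>^2" for s
  proof -
    have "1 + \<alpha> * s^2 * v > 0" using al v by (simp add: add_pos_nonneg)
    then show ?thesis unfolding nonlin_def a_def using al by (simp add: power_mult_distrib mult_ac)
  qed
  have e2: "nonlin_deriv \<alpha> v = ((4 * a^2 + 2 * a^3) / (1 + a)^2) / \<alpha>^2"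
  proof -
    have "4 * a^2 + 2 * a^3 = \<alpha>^2 * (4 * v^2 + 2 * \<alpha> * v^3)" unfolding a_def by algebra
    then show ?thesis unfolding nonlin_deriv_def a_def using al by simp
  qed
  have "nonlin \<alpha> (1+t) v - nonlin \<alpha> 1 v - t * nonlin_deriv \<alpha> v
      = ((1+t)^4 * a^2 / (1 + a * (1+t)^2) - a^2 / (1 + a) - t * ((4 * a^2 + 2 * a^3) / (1 + a)^2))
        / \<alpha>^2"
    unfolding e1 e2 by (simp add: diff_divide_distrib)
  then have "\<bar>nonlin \<alpha> (1+t) v - nonlin \<alpha> 1 v - t * nonlin_deriv \<alpha> v\<bar>
      = \<bar>(1+t)^4 * a^2 / (1 + a * (1+t)^2) - a^2 / (1 + a) - t * ((4 * a^2 + 2 * a^3) / (1 + a)^2)\<bar>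
        / \<alpha>^2"
    by (simp add: abs_divide)
  also have "\<dots> \<le> t^2 * (a + 4) / \<alpha>^2"
    using nonlin_taylor_normalized[OF a t] al by (intro divide_right_mono) auto
  also have "\<dots> = t^2 * (v / \<alpha> + 4 / \<alpha>^2)"
    unfolding a_def using al by (simp add: field_simps power2_eq_square)
  finally show ?thesis .
qed

lemma nonlin_bounds:
  fixes \<alpha> v s :: real
  assumes al: "\<alpha> > 0" and v: "v \<ge> 0"
  shows "0 \<le> nonlin \<alpha> s v" "nonlin \<alpha> s v \<le> s^2 * v / \<alpha>"
    "0 \<le> nonlin_deriv \<alpha> v" "nonlin_deriv \<alpha> v \<le> 4 * v / \<alpha>"
proof -
  have d1: "1 + \<alpha> * s^2 * v > 0" using al v by (simp add: add_pos_nonneg)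
  have d2: "1 + \<alpha> * v > 0" using al v by (simp add: add_pos_nonneg)
  show "0 \<le> nonlin \<alpha> s v" unfolding nonlin_def using d1 by simp
  show "0 \<le> nonlin_deriv \<alpha> v" unfolding nonlin_deriv_def using al v by simp
  have "0 \<le> s * (s * v)" using mult_nonneg_nonneg[OF zero_le_square[of s] v] by (simp add: mult.assoc)
  then have "\<alpha> * (s^4 * v^2) \<le> s^2 * v * (1 + \<alpha> * s^2 * v)"
    by (simp add: algebra_simps power2_eq_square power4_eq_xxxx)
  then show "nonlin \<alpha> s v \<le> s^2 * v / \<alpha>" unfolding nonlin_def using d1 al
    by (simp add: divide_le_eq le_divide_eq mult.commute)
  have "0 \<le> 4 * v + 4 * \<alpha> * v^2 + 2 * \<alpha>^2 * v^3" using al v by simp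
  then have "\<alpha> * (4 * v^2 + 2 * \<alpha> * v^3) \<le> 4 * v * (1 + \<alpha> * v)^2"
    by (simp add: algebra_simps power2_eq_square power3_eq_cube)
  then show "nonlin_deriv \<alpha> v \<le> 4 * v / \<alpha>" unfolding nonlin_deriv_def using d2 al
    by (simp add: divide_le_eq le_divide_eq mult.commute)
qed

lemma two_nonlin_minus_nonlin_deriv:
  assumes "\<alpha> > 0" "v \<ge> 0"
  shows "2 * (r * nonlin \<alpha> 1 v) - r * nonlin_deriv \<alpha> v = - 2 * (r * v^2 / (1 + \<alpha> * v)^2)"
proof -
  define Y where "Y = 1 + \<alpha> * v"
  have Y: "Y \<noteq> 0" unfolding Y_def using assms by (smt (verit) mult_nonneg_nonneg)
  have "2 * (v^2 / Y) - (4 * v^2 + 2 * \<alpha> * v^3) / Y^2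
      = (2 * v^2 * Y - (4 * v^2 + 2 * \<alpha> * v^3)) / Y^2"
    using Y by (simp add: field_simps power2_eq_square)
  also have "2 * v^2 * Y - (4 * v^2 + 2 * \<alpha> * v^3) = - 2 * v^2" unfolding Y_def by algebra
  finally have "2 * (v^2 / Y) - (4 * v^2 + 2 * \<alpha> * v^3) / Y^2 = - 2 * v^2 / Y^2" .
  then have "r * (2 * (v^2 / Y) - (4 * v^2 + 2 * \<alpha> * v^3) / Y^2) = - 2 * (r * v^2 / Y^2)"
    by simp
  moreover have "nonlin \<alpha> 1 v = v^2 / Y" unfolding nonlin_def Y_def by simp
  ultimately show ?thesis
    unfolding nonlin_deriv_def Y_def[symmetric] by (simp add: algebra_simps)
qed

lemma nonlin_one_le:
  fixes \<alpha> v N :: real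
  assumes al: "\<alpha> > 0" and v: "0 \<le> v" "v \<le> N"
  shows "nonlin \<alpha> 1 v \<le> N * v" "nonlin \<alpha> 1 v \<le> (1 + \<alpha> * N) * (v^2 / (1 + \<alpha> * v)^2)"
proof -
  have d: "1 + \<alpha> * v \<ge> 1" using al v by simp
  have p: "nonlin \<alpha> 1 v = v^2 / (1 + \<alpha> * v)" unfolding nonlin_def by simp
  have "v^2 / (1 + \<alpha> * v) \<le> v^2" using divide_left_mono[of 1 "1 + \<alpha> * v" "v^2"] d by simp
  also have "v^2 \<le> N * v" using v by (simp add: power2_eq_square mult_right_mono)
  finally show "nonlin \<alpha> 1 v \<le> N * v" unfolding p .
  have "v^2 / (1 + \<alpha> * v) = (1 + \<alpha> * v) * (v^2 / (1 + \<alpha> * v)^2)"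
    using d by (simp add: power2_eq_square)
  also have "\<dots> \<le> (1 + \<alpha> * N) * (v^2 / (1 + \<alpha> * v)^2)"
    using al v by (intro mult_right_mono) auto
  finally show "nonlin \<alpha> 1 v \<le> (1 + \<alpha> * N) * (v^2 / (1 + \<alpha> * v)^2)" unfolding p .
qed

definition gamma_quadratic :: "real \<Rightarrow> int \<Rightarrow> real \<Rightarrow> (real \<Rightarrow> real) \<Rightarrow> (real \<Rightarrow> real) \<Rightarrow> real" where
  "gamma_quadratic R n \<kappa> u u' = (LINT r:{0..R}|lborel.
     r * (u' r)^2 + (real_of_int n)^2 * ((u r)^2 / r) + 2 * \<kappa> * (r * (u r)^2))"

lemma gamma_integrand_scale:
  fixes \<alpha> r s b c n2 \<kappa> :: real
  assumes al: "\<alpha> > 0"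
  shows "r * (s * b)^2 + n2 / r * (s * c)^2 - 2 * (1/\<alpha> - \<kappa>) * r * (s * c)^2
      + 2 * (1/\<alpha>) * (r * (s * c)^2 / (1 + \<alpha> * (s * c)^2))
    = s^2 * (r * b^2 + n2 * (c^2 / r) + 2 * \<kappa> * (r * c^2)) - 2 * (r * nonlin \<alpha> s (c^2))"
proof -
  define w where "w = s * c"
  define D where "D = 1 + \<alpha> * w^2"
  have D: "D \<noteq> 0" unfolding D_def using al by (smt (verit) zero_le_power2 mult_nonneg_nonneg)
  have P: "nonlin \<alpha> s (c^2) = w^4 / D"
    unfolding nonlin_def D_def w_def by (simp add: power_mult_distrib mult_ac power4_eq_xxxx power2_eq_square)
  have "2 * (1/\<alpha>) * (r * w^2 / D) - 2 * (1/\<alpha>) * r * w^2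
      = (2 * r * w^2 - 2 * r * w^2 * D) / (\<alpha> * D)"
    using D al by (simp add: field_simps)
  also have "2 * r * w^2 - 2 * r * w^2 * D = \<alpha> * (- 2 * r * w^4)" unfolding D_def by algebra
  also have "\<alpha> * (- 2 * r * w^4) / (\<alpha> * D) = - 2 * (r * (w^4 / D))" using al D by simp
  finally have k: "2 * (1/\<alpha>) * (r * w^2 / D) - 2 * (1/\<alpha>) * r * w^2 = - 2 * (r * (w^4 / D))" .
  show ?thesis
    unfolding P D_def[symmetric] w_def[symmetric] using k
    by (simp add: w_def power_mult_distrib algebra_simps)
qed

lemma nonlin_integrable:
  assumes H: "(u, u') \<in> Hspace R" and al: "\<alpha> > 0"
  shows "set_integrable lborel {0..R} (\<lambda>r. r * nonlin \<alpha> s ((u r)^2))"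
    "set_integrable lborel {0..R} (\<lambda>r. r * nonlin_deriv \<alpha> ((u r)^2))"
proof -
  note [measurable] = HspaceD(1,2)[OF H]
  note L = Hnorm_integrand_components(3)[OF HspaceD[OF H]]
  show "set_integrable lborel {0..R} (\<lambda>r. r * nonlin \<alpha> s ((u r)^2))"
  proof (rule set_integrable_bound[OF set_integrable_mult_right[OF L, of "s^2 / \<alpha>"]])
    show "set_borel_measurable lborel {0..R} (\<lambda>r. r * nonlin \<alpha> s ((u r)^2))"
      unfolding set_borel_measurable_def nonlin_def by measurable
    show "AE x in lborel. x \<in> {0..R} \<longrightarrow> norm (x * nonlin \<alpha> s ((u x)^2)) \<le> norm (s^2 / \<alpha> * (x * (u x)^2))"
    proof (rule AE_I2, rule impI)
      fix x :: real assume x: "x \<in> {0..R}"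
      have "x * nonlin \<alpha> s ((u x)^2) \<le> x * (s^2 * (u x)^2 / \<alpha>)"
        using x nonlin_bounds(2)[OF al zero_le_power2] by (intro mult_left_mono) auto
      moreover have "0 \<le> x * nonlin \<alpha> s ((u x)^2)"
        using x nonlin_bounds(1)[OF al zero_le_power2] by simp
      moreover have "x * (s^2 * (u x)^2 / \<alpha>) = s^2 / \<alpha> * (x * (u x)^2)" by simp
      ultimately show "norm (x * nonlin \<alpha> s ((u x)^2)) \<le> norm (s^2 / \<alpha> * (x * (u x)^2))"
        by (metis abs_ge_self abs_of_nonneg order_trans real_norm_def)
    qed
  qed
  show "set_integrable lborel {0..R} (\<lambda>r. r * nonlin_deriv \<alpha> ((u r)^2))"
  proof (rule set_integrable_bound[OF set_integrable_mult_right[OF L, of "4 / \<alpha>"]])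
    show "set_borel_measurable lborel {0..R} (\<lambda>r. r * nonlin_deriv \<alpha> ((u r)^2))"
      unfolding set_borel_measurable_def nonlin_deriv_def by measurable
    show "AE x in lborel. x \<in> {0..R} \<longrightarrow> norm (x * nonlin_deriv \<alpha> ((u x)^2)) \<le> norm (4 / \<alpha> * (x * (u x)^2))"
    proof (rule AE_I2, rule impI)
      fix x :: real assume x: "x \<in> {0..R}"
      have "x * nonlin_deriv \<alpha> ((u x)^2) \<le> x * (4 * (u x)^2 / \<alpha>)"
        using x nonlin_bounds(4)[OF al zero_le_power2] by (intro mult_left_mono) auto
      moreover have "0 \<le> x * nonlin_deriv \<alpha> ((u x)^2)"
        using x nonlin_bounds(3)[OF al zero_le_power2] by simp
      moreover have "x * (4 * (u x)^2 / \<alpha>) = 4 / \<alpha> * (x * (u x)^2)" by simp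
      ultimately show "norm (x * nonlin_deriv \<alpha> ((u x)^2)) \<le> norm (4 / \<alpha> * (x * (u x)^2))"
        by (metis abs_ge_self abs_of_nonneg order_trans real_norm_def)
    qed
  qed
qed

lemma gamma_scale:
  assumes H: "(u, u') \<in> Hspace R" and al: "\<alpha> > 0"
  shows "gamma R n \<alpha> \<kappa> (Hscale s (u, u'))
    = s^2 / 2 * gamma_quadratic R n \<kappa> u u' - (LINT r:{0..R}|lborel. r * nonlin \<alpha> s ((u r)^2))"
proof -
  have iQ: "set_integrable lborel {0..R}
      (\<lambda>r. r * (u' r)^2 + (real_of_int n)^2 * ((u r)^2 / r) + 2 * \<kappa> * (r * (u r)^2))"
    using Hnorm_integrand_components[OF HspaceD[OF H]]
    by (intro set_integral_add(1) set_integrable_mult_right) auto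
  have "gamma R n \<alpha> \<kappa> (Hscale s (u, u')) = 1/2 * (LINT r:{0..R}|lborel.
      s^2 * (r * (u' r)^2 + (real_of_int n)^2 * ((u r)^2 / r) + 2 * \<kappa> * (r * (u r)^2))
        - 2 * (r * nonlin \<alpha> s ((u r)^2)))"
    unfolding gamma_def Hscale_def using gamma_integrand_scale[OF al] by simp
  also have "\<dots> = 1/2 * (s^2 * gamma_quadratic R n \<kappa> u u'
      - 2 * (LINT r:{0..R}|lborel. r * nonlin \<alpha> s ((u r)^2)))"
    unfolding gamma_quadratic_def
    by (simp only: set_integral_diff(2)[OF set_integrable_mult_right[OF iQ]
          set_integrable_mult_right[OF nonlin_integrable(1)[OF H al]]] set_integral_mult_right)
  finally show ?thesis by simp
qed

lemma has_real_derivative_if_quadratic_remainder: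
  fixes G :: "real \<Rightarrow> real"
  assumes d: "\<delta> > 0" and b: "\<And>t. \<bar>t\<bar> \<le> \<delta> \<Longrightarrow> \<bar>G t - G 0 - t * D\<bar> \<le> K * t^2"
  shows "(G has_real_derivative D) (at 0)"
proof -
  have "((\<lambda>t. (G t - G 0) / t - D) \<longlongrightarrow> 0) (at 0)"
  proof (rule Lim_null_comparison)
    have "((\<lambda>t. \<bar>K\<bar> * \<bar>t\<bar>) \<longlongrightarrow> \<bar>K\<bar> * \<bar>0\<bar>) (at (0::real))" by (intro tendsto_intros)
    then show "((\<lambda>t. \<bar>K\<bar> * \<bar>t\<bar>) \<longlongrightarrow> 0) (at 0)" by simp
    show "\<forall>\<^sub>F t in at 0. norm ((G t - G 0) / t - D) \<le> \<bar>K\<bar> * \<bar>t\<bar>"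
      unfolding eventually_at
    proof (intro exI[of _ \<delta>] conjI ballI impI)
      fix t :: real assume t: "t \<noteq> 0 \<and> dist t 0 < \<delta>"
      have "(G t - G 0) / t - D = (G t - G 0 - t * D) / t" using t by (simp add: field_simps)
      then have "norm ((G t - G 0) / t - D) = \<bar>G t - G 0 - t * D\<bar> / \<bar>t\<bar>"
        by (simp add: abs_divide)
      also have "\<dots> \<le> K * (\<bar>t\<bar> * \<bar>t\<bar>) / \<bar>t\<bar>"
        using b[of t] t by (intro divide_right_mono) (auto simp: power2_eq_square)
      also have "\<dots> = K * \<bar>t\<bar>" using t by (simp del: abs_mult_self_eq)
      also have "\<dots> \<le> \<bar>K\<bar> * \<bar>t\<bar>" by (intro mult_right_mono) auto
      finally show "norm ((G t - G 0) / t - D) \<le> \<bar>K\<bar> * \<bar>t\<bar>" .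
    qed (rule d)
  qed
  then show ?thesis by (simp add: DERIV_def LIM_zero_iff)
qed

lemma nonlin_integral_taylor:
  assumes H: "(u, u') \<in> Hspace R" and al: "\<alpha> > 0" and t: "\<bar>t\<bar> \<le> 1/2"
  defines "A \<equiv> \<lambda>s. LINT r:{0..R}|lborel. r * nonlin \<alpha> s ((u r)^2)"
    and "A' \<equiv> LINT r:{0..R}|lborel. r * nonlin_deriv \<alpha> ((u r)^2)"
  shows "\<bar>A (1 + t) - A 1 - t * A'\<bar> \<le> t^2 * (LINT r:{0..R}|lborel. r * ((u r)^2 / \<alpha> + 4 / \<alpha>^2))"
proof -
  note i1 = nonlin_integrable(1)[OF H al, of "1 + t"]
  note i2 = nonlin_integrable(1)[OF H al, of 1]
  note i3 = set_integrable_mult_right[OF nonlin_integrable(2)[OF H al], of t]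
  define f where "f r = r * nonlin \<alpha> (1+t) ((u r)^2) - r * nonlin \<alpha> 1 ((u r)^2)
    - t * (r * nonlin_deriv \<alpha> ((u r)^2))" for r
  have int_f: "set_integrable lborel {0..R} f"
    unfolding f_def by (intro set_integral_diff(1) i1 i2 i3)
  have iC: "set_integrable lborel {0..R} (\<lambda>r. r * ((u r)^2 / \<alpha> + 4 / \<alpha>^2))"
  proof -
    have "set_integrable lborel {0..R} (\<lambda>r. 1 / \<alpha> * (r * (u r)^2) + 4 / \<alpha>^2 * r)"
      by (rule set_integral_add(1)[OF set_integrable_mult_right set_integrable_mult_right])
        (auto intro: Hnorm_integrand_components(3)[OF HspaceD[OF H]]
          borel_integrable_atLeastAtMost' continuous_intros)
    then show ?thesis by (rule set_integrable_cong[THEN iffD1, rotated 3]) (simp_all add: algebra_simps)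
  qed
  have "A (1 + t) - A 1 - t * A' = (LINT r:{0..R}|lborel. f r)"
    unfolding A_def A'_def f_def
    by (simp only: set_integral_diff(2)[OF set_integral_diff(1)[OF i1 i2] i3]
        set_integral_diff(2)[OF i1 i2] set_integral_mult_right)
  also have "\<bar>\<dots>\<bar> \<le> (LINT r:{0..R}|lborel. \<bar>f r\<bar>)"
    using set_integral_norm_bound[OF int_f] by simp
  also have "\<dots> \<le> (LINT r:{0..R}|lborel. t^2 * (r * ((u r)^2 / \<alpha> + 4 / \<alpha>^2)))"
  proof (rule set_integral_mono[OF _ set_integrable_mult_right[OF iC]])
    show "set_integrable lborel {0..R} (\<lambda>r. \<bar>f r\<bar>)"
      using set_integrable_norm[OF int_f] by simp
    fix r :: real assume r: "r \<in> {0..R}"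
    have "\<bar>f r\<bar> = r * \<bar>nonlin \<alpha> (1+t) ((u r)^2) - nonlin \<alpha> 1 ((u r)^2) - t * nonlin_deriv \<alpha> ((u r)^2)\<bar>"
    proof -
      have "f r = r * (nonlin \<alpha> (1+t) ((u r)^2) - nonlin \<alpha> 1 ((u r)^2) - t * nonlin_deriv \<alpha> ((u r)^2))"
        unfolding f_def by (simp add: algebra_simps)
      then show ?thesis using r by (simp add: abs_mult)
    qed
    also have "\<dots> \<le> r * (t^2 * ((u r)^2 / \<alpha> + 4 / \<alpha>^2))"
      using r by (intro mult_left_mono nonlin_taylor[OF al _ t]) auto
    finally show "\<bar>f r\<bar> \<le> t^2 * (r * ((u r)^2 / \<alpha> + 4 / \<alpha>^2))" by (simp add: mult_ac)
  qed
  also have "\<dots> = t^2 * (LINT r:{0..R}|lborel. r * ((u r)^2 / \<alpha> + 4 / \<alpha>^2))"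
    by (rule set_integral_mult_right)
  finally show ?thesis .
qed

lemma gamma_ray_has_derivative:
  assumes H: "(u, u') \<in> Hspace R" and al: "\<alpha> > 0"
  shows "((\<lambda>t. gamma R n \<alpha> \<kappa> (Hscale (1 + t) (u, u'))) has_real_derivative
     (gamma_quadratic R n \<kappa> u u' - (LINT r:{0..R}|lborel. r * nonlin_deriv \<alpha> ((u r)^2)))) (at 0)"
proof (rule has_real_derivative_if_quadratic_remainder[of "1/2"])
  define Q where "Q = gamma_quadratic R n \<kappa> u u'"
  define A where "A s = (LINT r:{0..R}|lborel. r * nonlin \<alpha> s ((u r)^2))" for s
  define A' where "A' = (LINT r:{0..R}|lborel. r * nonlin_deriv \<alpha> ((u r)^2))"
  define C where "C = (LINT r:{0..R}|lborel. r * ((u r)^2 / \<alpha> + 4 / \<alpha>^2))"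
  have G: "gamma R n \<alpha> \<kappa> (Hscale (1 + t) (u, u')) = (1 + t)^2 / 2 * Q - A (1 + t)" for t
    unfolding Q_def A_def by (rule gamma_scale[OF H al])
  fix t :: real assume t: "\<bar>t\<bar> \<le> 1/2"
  have b: "\<bar>A (1 + t) - A 1 - t * A'\<bar> \<le> t^2 * C"
    unfolding A_def A'_def C_def by (rule nonlin_integral_taylor[OF H al t])
  have "gamma R n \<alpha> \<kappa> (Hscale (1 + t) (u, u')) - gamma R n \<alpha> \<kappa> (Hscale (1 + 0) (u, u')) - t * (Q - A')
      = t^2 / 2 * Q - (A (1 + t) - A 1 - t * A')"
    unfolding G by (simp add: power2_eq_square algebra_simps)
  also have "\<bar>\<dots>\<bar> \<le> t^2 / 2 * \<bar>Q\<bar> + t^2 * C"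
    using b abs_triangle_ineq4[of "t^2 / 2 * Q" "A (1 + t) - A 1 - t * A'"] by (simp add: abs_mult)
  finally show "\<bar>gamma R n \<alpha> \<kappa> (Hscale (1 + t) (u, u')) - gamma R n \<alpha> \<kappa> (Hscale (1 + 0) (u, u'))
      - t * (gamma_quadratic R n \<kappa> u u' - (LINT r:{0..R}|lborel. r * nonlin_deriv \<alpha> ((u r)^2)))\<bar>
    \<le> (\<bar>Q\<bar> / 2 + C) * t^2"
    unfolding Q_def A'_def by (simp add: algebra_simps)
qed simp


section \<open>Coercivity of the quadratic part and the estimate on \<open>M\<close>\<close>

lemma exists_radius_below_r0:
  assumes R: "R > 0" and \<kappa>: "- (r0^2 + n2) / (2 * R^2) < \<kappa>"
  obtains \<rho> where "0 < \<rho>" "\<rho> < r0" "\<rho>^2 + n2 + 2 * \<kappa> * R^2 > 0"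
proof -
  define g where "g = 2 * \<kappa> * R^2 + r0^2 + n2"
  have "- (r0^2 + n2) < \<kappa> * (2 * R^2)" using \<kappa> R by (simp add: divide_less_eq)
  then have g: "g > 0" unfolding g_def by (simp add: algebra_simps)
  have r0: "r0 > 0" by (rule r0_pos_and_J0_pos_below(1))
  define m where "m = max (r0^2 / 4) (r0^2 - g / 2)"
  have m: "0 < m" "m < r0^2" "r0^2 - g / 2 \<le> m"
    unfolding m_def using r0 g by (auto simp: less_max_iff_disj)
  show ?thesis
  proof (rule that[of "sqrt m"])
    show "0 < sqrt m" using m by simp
    show "sqrt m < r0" using m r0 real_sqrt_less_iff[of m "r0^2"] by simp
    show "(sqrt m)^2 + n2 + 2 * \<kappa> * R^2 > 0"
    proof -
      have "(sqrt m)^2 = m" using m by simp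
      then show ?thesis using m g unfolding g_def by (simp add: field_simps)
    qed
  qed
qed

lemma quadratic_form_lower_bound:
  fixes P W L K n2 \<kappa> :: real
  assumes KL: "K * L \<le> P + n2 * W" and K: "K > 0" "K + 2 * \<kappa> > 0"
    and nonneg: "L \<ge> 0" "W \<ge> 0" "P \<ge> 0" and n2: "n2 \<ge> 1"
  shows "min 1 (1 + 2 * \<kappa> / K) * (P + W) \<le> P + n2 * W + 2 * \<kappa> * L"
proof -
  have PW: "P + W \<le> P + n2 * W" using n2 nonneg mult_right_mono[of 1 n2 W] by simp
  show ?thesis
  proof (cases "\<kappa> \<ge> 0")
    case True
    have "min 1 (1 + 2 * \<kappa> / K) * (P + W) \<le> 1 * (P + W)"
      using nonneg by (intro mult_right_mono) auto
    then show ?thesis using PW True nonneg by (smt (verit) mult_nonneg_nonneg)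
  next
    case False
    have "L \<le> (P + n2 * W) / K" using KL K by (simp add: le_divide_eq mult.commute)
    then have "2 * \<kappa> * ((P + n2 * W) / K) \<le> 2 * \<kappa> * L" using False by (intro mult_left_mono_neg) auto
    then have "(1 + 2 * \<kappa> / K) * (P + n2 * W) \<le> P + n2 * W + 2 * \<kappa> * L"
      by (simp add: algebra_simps)
    moreover have "1 + 2 * \<kappa> / K > 0" using K by (simp add: field_simps)
    then have "(1 + 2 * \<kappa> / K) * (P + W) \<le> (1 + 2 * \<kappa> / K) * (P + n2 * W)"
      using PW by (intro mult_left_mono) auto
    moreover have "min 1 (1 + 2 * \<kappa> / K) * (P + W) \<le> (1 + 2 * \<kappa> / K) * (P + W)"
      using nonneg by (intro mult_right_mono) auto
    ultimately show ?thesis by linarith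
  qed
qed

lemma gamma_quadratic_eq:
  assumes H: "(u, u') \<in> Hspace R"
  shows "gamma_quadratic R n \<kappa> u u' = (LINT r:{0..R}|lborel. r * (u' r)^2)
    + (real_of_int n)^2 * (LINT r:{0..R}|lborel. (u r)^2 / r) + 2 * \<kappa> * (LINT r:{0..R}|lborel. r * (u r)^2)"
proof -
  note comps = Hnorm_integrand_components[OF HspaceD[OF H]]
  show ?thesis
    unfolding gamma_quadratic_def
    by (simp only: set_integral_add(2)[OF set_integral_add(1)[OF comps(1)
          set_integrable_mult_right[OF comps(2)]] set_integrable_mult_right[OF comps(3)]]
        set_integral_add(2)[OF comps(1) set_integrable_mult_right[OF comps(2)]]
        set_integral_mult_right)
qed

lemma gamma_quadratic_coercive:
  assumes n: "\<bar>n\<bar> \<ge> 1" and R: "R > 0"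
    and \<kappa>: "- (r0^2 + (real_of_int n)^2) / (2 * R^2) < \<kappa>"
  obtains \<theta> where "\<theta> > 0"
    "\<And>u u'. (u, u') \<in> Hspace R \<Longrightarrow> \<theta> * Hnorm2 R u u' \<le> gamma_quadratic R n \<kappa> u u'"
proof -
  define n2 where "n2 = (real_of_int n)^2"
  have n2: "n2 \<ge> 1"
    using n power_mono[of 1 "\<bar>real_of_int n\<bar>" 2] unfolding n2_def by simp
  obtain \<rho> where \<rho>: "0 < \<rho>" "\<rho> < r0" "\<rho>^2 + n2 + 2 * \<kappa> * R^2 > 0"
    using exists_radius_below_r0[OF R \<kappa>[folded n2_def]] by blast
  define K where "K = (\<rho>^2 + n2) / R^2"
  have K: "K > 0" "K + 2 * \<kappa> > 0"
    unfolding K_def using \<rho>(3) n2 R by (auto simp: field_simps add_pos_nonneg)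
  show ?thesis
  proof (rule that[of "min 1 (1 + 2 * \<kappa> / K)"])
    show "min 1 (1 + 2 * \<kappa> / K) > 0" using K by (simp add: field_simps)
    fix u u' assume H: "(u, u') \<in> Hspace R"
    note comps = Hnorm_integrand_components[OF HspaceD[OF H]]
    define P where "P = (LINT r:{0..R}|lborel. r * (u' r)^2)"
    define W where "W = (LINT r:{0..R}|lborel. (u r)^2 / r)"
    define L where "L = (LINT r:{0..R}|lborel. r * (u r)^2)"
    have nonneg: "L \<ge> 0" "W \<ge> 0" "P \<ge> 0"
      using Hnorm_integrand_bounds(1-3)[OF HspaceD[OF H]] unfolding P_def W_def L_def by auto
    have "gamma_quadratic R n \<kappa> u u' = P + n2 * W + 2 * \<kappa> * L"
      unfolding P_def W_def L_def n2_def by (rule gamma_quadratic_eq[OF H])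
    moreover have "Hnorm2 R u u' = P + W" unfolding P_def W_def by (rule comps(4))
    moreover have "K * L \<le> P + n2 * W"
    proof -
      have "(\<rho>/R)^2 * L \<le> P"
        unfolding L_def P_def by (rule Hspace_weighted_poincare[OF H R \<rho>(1,2)])
      moreover have "n2 / R^2 * L \<le> n2 * W"
      proof -
        have "n2 * L \<le> n2 * (R^2 * W)"
          using comps(5) n2 unfolding L_def W_def by (intro mult_left_mono) auto
        then show ?thesis using R by (simp add: field_simps)
      qed
      moreover have "K * L = (\<rho>/R)^2 * L + n2 / R^2 * L"
        unfolding K_def by (simp add: power_divide add_divide_distrib distrib_right)
      ultimately show ?thesis by linarith
    qed
    ultimately show "min 1 (1 + 2 * \<kappa> / K) * Hnorm2 R u u' \<le> gamma_quadratic R n \<kappa> u u'"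
      using quadratic_form_lower_bound[OF _ K nonneg n2] by simp
  qed
qed

lemma nehari_lower_bound_arith:
  fixes \<theta> N L E R \<alpha> A :: real
  assumes th: "\<theta> > 0" and N: "N > 0" and R: "R > 0" and al: "\<alpha> > 0"
    and QN: "\<theta> * N \<le> 2 * A" and AL: "A \<le> N * L" and L: "L \<le> R^2 * N"
    and AE: "A \<le> (1 + \<alpha> * N) * E"
  shows "\<theta> * (\<theta> / (2 * R^2)) / (2 * (1 + \<alpha> * (\<theta> / (2 * R^2)))) \<le> E"
proof -
  define N0 where "N0 = \<theta> / (2 * R^2)"
  have N0: "N0 > 0" unfolding N0_def using th R by simp
  have "\<theta> * N \<le> 2 * (N * (R^2 * N))" using QN AL L N by (smt (verit) mult_left_mono)
  then have "\<theta> \<le> 2 * R^2 * N" using N by (simp add: algebra_simps power2_eq_square)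
  then have NN0: "N0 \<le> N" unfolding N0_def using R by (simp add: field_simps)
  have d: "1 + \<alpha> * N > 0" "1 + \<alpha> * N0 > 0" using al N N0 by (simp_all add: add_pos_pos)
  have "\<theta> * N \<le> 2 * ((1 + \<alpha> * N) * E)" using QN AE by linarith
  then have EN: "\<theta> * N / (2 * (1 + \<alpha> * N)) \<le> E" using d by (simp add: divide_le_eq mult_ac)
  have "N0 / (1 + \<alpha> * N0) \<le> N / (1 + \<alpha> * N)"
    using d NN0 by (simp add: divide_le_eq le_divide_eq algebra_simps)
  then have "\<theta> * (N0 / (1 + \<alpha> * N0)) / 2 \<le> \<theta> * (N / (1 + \<alpha> * N)) / 2"
    using th by (intro divide_right_mono mult_left_mono) auto
  then have "\<theta> * N0 / (2 * (1 + \<alpha> * N0)) \<le> \<theta> * N / (2 * (1 + \<alpha> * N))" by (simp add: field_simps)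
  with EN show ?thesis unfolding N0_def by linarith
qed

definition quartic_term :: "real \<Rightarrow> real \<Rightarrow> (real \<Rightarrow> real) \<Rightarrow> real" where
  "quartic_term R \<alpha> u = (LINT r:{0..R}|lborel. r * ((u r)^2)^2 / (1 + \<alpha> * (u r)^2)^2)"

lemma Mset_gamma_quadratic_eq:
  assumes M: "(u, u') \<in> Mset R n \<alpha> \<kappa>" and al: "\<alpha> > 0"
  shows "gamma_quadratic R n \<kappa> u u' = 2 * (LINT r:{0..R}|lborel. r * nonlin \<alpha> 1 ((u r)^2))"
proof -
  have H: "(u, u') \<in> Hspace R" and g0: "gamma R n \<alpha> \<kappa> (u, u') = 0"
    using M unfolding Mset_def by auto
  have "Hscale 1 (u, u') = (u, u')" unfolding Hscale_def by simp
  then show ?thesis using gamma_scale[OF H al, of n \<kappa> 1] g0 by simp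
qed

lemma Mset_ray_has_derivative:
  assumes M: "(u, u') \<in> Mset R n \<alpha> \<kappa>" and al: "\<alpha> > 0"
  shows "((\<lambda>t. gamma R n \<alpha> \<kappa> (Hscale (1 + t) (u, u'))) has_real_derivative
    - 2 * quartic_term R \<alpha> u) (at 0)"
proof -
  have H: "(u, u') \<in> Hspace R" using M unfolding Mset_def by auto
  define A1 where "A1 = (LINT r:{0..R}|lborel. r * nonlin \<alpha> 1 ((u r)^2))"
  define A' where "A' = (LINT r:{0..R}|lborel. r * nonlin_deriv \<alpha> ((u r)^2))"
  have Q: "gamma_quadratic R n \<kappa> u u' = 2 * A1"
    unfolding A1_def by (rule Mset_gamma_quadratic_eq[OF M al])
  have "2 * A1 - A' = (LINT r:{0..R}|lborel. 2 * (r * nonlin \<alpha> 1 ((u r)^2)) - r * nonlin_deriv \<alpha> ((u r)^2))"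
    unfolding A1_def A'_def
    by (simp only: set_integral_diff(2)[OF set_integrable_mult_right[OF nonlin_integrable(1)[OF H al]]
          nonlin_integrable(2)[OF H al]] set_integral_mult_right)
  also have "\<dots> = (LINT r:{0..R}|lborel. - 2 * (r * ((u r)^2)^2 / (1 + \<alpha> * (u r)^2)^2))"
    by (simp only: two_nonlin_minus_nonlin_deriv[OF al zero_le_power2])
  also have "\<dots> = - 2 * quartic_term R \<alpha> u"
    unfolding quartic_term_def by (rule set_integral_mult_right)
  finally show ?thesis
    using gamma_ray_has_derivative[OF H al, of n \<kappa>] unfolding Q A1_def[symmetric] A'_def[symmetric]
    by simp
qed

lemma quartic_term_integrable:
  assumes H: "(u, u') \<in> Hspace R" and al: "\<alpha> > 0"
  shows "set_integrable lborel {0..R} (\<lambda>r. r * ((u r)^2)^2 / (1 + \<alpha> * (u r)^2)^2)"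
proof -
  have "set_integrable lborel {0..R}
      (\<lambda>r. (- 1/2) * (2 * (r * nonlin \<alpha> 1 ((u r)^2)) - r * nonlin_deriv \<alpha> ((u r)^2)))"
    by (intro set_integrable_mult_right set_integral_diff(1) nonlin_integrable[OF H al])
  then show ?thesis by (simp only: two_nonlin_minus_nonlin_deriv[OF al zero_le_power2]) simp
qed

lemma nonlin_integral_le_if_sq_le:
  assumes H: "(u, u') \<in> Hspace R" and al: "\<alpha> > 0"
    and sup: "AE x in lborel. x \<in> {0..R} \<longrightarrow> (u x)^2 \<le> N"
  shows "(LINT r:{0..R}|lborel. r * nonlin \<alpha> 1 ((u r)^2)) \<le> N * (LINT r:{0..R}|lborel. r * (u r)^2)"
    "(LINT r:{0..R}|lborel. r * nonlin \<alpha> 1 ((u r)^2)) \<le> (1 + \<alpha> * N) * quartic_term R \<alpha> u"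
proof -
  note L = Hnorm_integrand_components(3)[OF HspaceD[OF H]]
  note [measurable] = HspaceD(1)[OF H]
  have "(LINT r:{0..R}|lborel. r * nonlin \<alpha> 1 ((u r)^2)) \<le> (LINT r:{0..R}|lborel. N * (r * (u r)^2))"
  proof (rule set_integral_mono_AE[OF nonlin_integrable(1)[OF H al] set_integrable_mult_right[OF L]])
    show "AE x \<in> {0..R} in lborel. x * nonlin \<alpha> 1 ((u x)^2) \<le> N * (x * (u x)^2)"
      using sup by eventually_elim
        (auto simp: mult.left_commute intro!: mult_left_mono nonlin_one_le(1)[OF al])
  qed
  then show "(LINT r:{0..R}|lborel. r * nonlin \<alpha> 1 ((u r)^2)) \<le> N * (LINT r:{0..R}|lborel. r * (u r)^2)"
    by simp
  have "(LINT r:{0..R}|lborel. r * nonlin \<alpha> 1 ((u r)^2))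
      \<le> (LINT r:{0..R}|lborel. (1 + \<alpha> * N) * (r * ((u r)^2)^2 / (1 + \<alpha> * (u r)^2)^2))"
  proof (rule set_integral_mono_AE[OF nonlin_integrable(1)[OF H al]
        set_integrable_mult_right[OF quartic_term_integrable[OF H al]]])
    show "AE x \<in> {0..R} in lborel.
        x * nonlin \<alpha> 1 ((u x)^2) \<le> (1 + \<alpha> * N) * (x * ((u x)^2)^2 / (1 + \<alpha> * (u x)^2)^2)"
      using sup
    proof eventually_elim
      case (elim x)
      show ?case
      proof
        assume x: "x \<in> {0..R}"
        have "x * nonlin \<alpha> 1 ((u x)^2) \<le> x * ((1 + \<alpha> * N) * (((u x)^2)^2 / (1 + \<alpha> * (u x)^2)^2))"
          using x elim nonlin_one_le(2)[OF al zero_le_power2] by (intro mult_left_mono) auto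
        then show "x * nonlin \<alpha> 1 ((u x)^2) \<le> (1 + \<alpha> * N) * (x * ((u x)^2)^2 / (1 + \<alpha> * (u x)^2)^2)"
          by (simp add: mult_ac)
      qed
    qed
  qed
  also have "\<dots> = (1 + \<alpha> * N) * quartic_term R \<alpha> u"
    unfolding quartic_term_def by (rule set_integral_mult_right)
  finally show "(LINT r:{0..R}|lborel. r * nonlin \<alpha> 1 ((u r)^2)) \<le> (1 + \<alpha> * N) * quartic_term R \<alpha> u" .
qed

lemma Mset_quartic_term_lower_bound:
  assumes M: "(u, u') \<in> Mset R n \<alpha> \<kappa>" and al: "\<alpha> > 0" and R: "R > 0" and th: "\<theta> > 0"
    and coercive: "\<theta> * Hnorm2 R u u' \<le> gamma_quadratic R n \<kappa> u u'"
  shows "\<theta> * (\<theta> / (2 * R^2)) / (2 * (1 + \<alpha> * (\<theta> / (2 * R^2)))) \<le> quartic_term R \<alpha> u"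
proof -
  have H: "(u, u') \<in> Hspace R" and Nne: "Hnorm2 R u u' \<noteq> 0"
    using M unfolding Mset_def by auto
  note bounds = Hnorm_integrand_bounds[OF HspaceD[OF H]]
  have N: "Hnorm2 R u u' > 0" using Nne bounds(1,4) by linarith
  have sup: "AE x in lborel. x \<in> {0..R} \<longrightarrow> (u x)^2 \<le> Hnorm2 R u u'"
    by (rule Hspace_sq_le_Hnorm2[OF H R])
  note A = nonlin_integral_le_if_sq_le[OF H al sup]
  show ?thesis
    using nehari_lower_bound_arith[OF th N R al _ A(1) bounds(6) A(2)]
      coercive Mset_gamma_quadratic_eq[OF M al] by simp
qed

theorem lemma4p3:
  fixes n :: int and \<alpha> R \<kappa> :: real
  assumes "\<bar>n\<bar> \<ge> 1" and "\<alpha> > 0" and "R > 0"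
    and "- (r0^2 + (real_of_int n)^2) / (2 * R^2) < \<kappa>"
    and "\<kappa> < 1/\<alpha> - (r0^2 + (real_of_int n)^2) / (2 * R^2)"
  shows "\<exists>C2 > 0. \<forall>u \<in> Mset R n \<alpha> \<kappa>.
           \<exists>D. ((\<lambda>t. gamma R n \<alpha> \<kappa> (Hscale (1 + t) u)) has_real_derivative D) (at 0)
               \<and> D < - C2"
proof -
  obtain \<theta> where th: "\<theta> > 0"
    and coercive: "\<And>u u'. (u, u') \<in> Hspace R \<Longrightarrow> \<theta> * Hnorm2 R u u' \<le> gamma_quadratic R n \<kappa> u u'"
    using gamma_quadratic_coercive[OF assms(1,3,4)] by blast
  define C where "C = \<theta> * (\<theta> / (2 * R^2)) / (2 * (1 + \<alpha> * (\<theta> / (2 * R^2))))"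
  have C: "C > 0" unfolding C_def using th assms(2,3) by (simp add: add_pos_pos)
  have "\<exists>D. ((\<lambda>t. gamma R n \<alpha> \<kappa> (Hscale (1 + t) (u, u'))) has_real_derivative D) (at 0) \<and> D < - C"
    if M: "(u, u') \<in> Mset R n \<alpha> \<kappa>" for u u'
  proof -
    have "(u, u') \<in> Hspace R" using M unfolding Mset_def by simp
    then have "C \<le> quartic_term R \<alpha> u"
      unfolding C_def by (rule Mset_quartic_term_lower_bound[OF M assms(2,3) th coercive])
    then show ?thesis using Mset_ray_has_derivative[OF M assms(2)] C by (intro exI[of _ "- 2 * quartic_term R \<alpha> u"]) auto
  qed
  then show ?thesis using C by fast
qed

end
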